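(* (a) $\mathbf T_{m+1}$ is a Poisson submanifold of $\mathfrak g$ equipped with the bracket ${\rm PB}_1({\rm R};\mathcal F)$. (b) Let $\varphi$ be an Ad-invariant function on $\mathfrak g$ and $\psi(T)=\varphi(T\mathcal F^{-1})=\varphi(\mathcal F^{-1}T)$. The Hamiltonian equation of $\psi$ with respect to ${\rm PB}_1({\rm R};\mathcal F)$ reads $\dot T=T\mathcal C_2-\mathcal C_1T$ with $\mathcal C_1=\frac12\mathcal F\,{\rm R}\big(\mathcal F^{-1}\nabla\varphi(T\mathcal F^{-1})\big)$, $\mathcal C_2=\frac12{\rm R}\big(\nabla\varphi(\mathcal F^{-1}T)\mathcal F^{-1}\big)\mathcal F$; it restricts to $\mathbf T_{m+1}$, and the matrices $\mathcal T_1=I+\alpha T\mathcal F^{-1}$, $\mathcal T_2=I+\alpha\mathcal F^{-1}T$ evolve by $\dot{\mathcal T}_i=[\mathcal T_i,\mathcal C_i]$, $i=1,2$. (c) For Ad-invariant $\varphi_1,\varphi_2$ on $\mathfrak g$, the functions $\psi_i(T)=\varphi_i(T\mathcal F^{-1})$ are in involution with respect to ${\rm PB}_1({\rm R};\mathcal F)$.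
   Context: Periodic lattice setting. Integers $N\ge2$, $m\ge1$; $\mathfrak g=\{X(\lambda)\in gl(N)[\lambda,\lambda^{-1}]:\Omega X(\lambda)\Omega^{-1}=X(\omega\lambda)\}$ with $\omega=e^{2\pi i/N}$, $\Omega=\mathrm{diag}(1,\omega,\dots,\omega^{N-1})$, matrix indices modulo $N$; $\langle X,Y\rangle$ = coefficient of $\lambda^0$ in $\mathrm{tr}(XY)$. $\mathfrak g_p$ = elements $\lambda^p\sum_{j-k\equiv p}x_{jk}E_{jk}$; $\pi_+,\pi_-$ projections onto $\oplus_{p\ge0}\mathfrak g_p$, $\oplus_{p<0}\mathfrak g_p$; ${\rm R}=\pi_+-\pi_-$. Gradient: $\langle\nabla\varphi(L),M\rangle=\frac{d}{d\varepsilon}\varphi(L+\varepsilon M)|_{\varepsilon=0}$; $\varphi$ Ad-invariant means $[\nabla\varphi(L),L]=0$ for all $L$. $\alpha$ real; $\mathcal E=\lambda\sum_kE_{k+1,k}$, $\mathcal F=I-\alpha\mathcal E$, $\mathcal F^{-1}$ understood as a formal power series in $\lambda$. $[X,Y]^{(\mathcal F)}=X\mathcal FY-Y\mathcal FX$; ${\rm PB}_1({\rm R};\mathcal F)$: $\{\varphi,\psi\}_1(L)=\frac12\langle[{\rm R}\nabla\varphi,\nabla\psi]^{(\mathcal F)}+[\nabla\varphi,{\rm R}\nabla\psi]^{(\mathcal F)},L\rangle$. $\mathbf T_{m+1}$ = set of $T=\mathcal E+\sum_kb_kE_{kk}+\sum_{j=1}^m\lambda^{-j}\sum_ka_k^{(j)}E_{k,k+j}$.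 Hamiltonian flow of $H$: $\frac{d}{dt}f=\{H,f\}$. *)

theory Defs
  imports "HOL-Analysis.Analysis"
begin

text \<open>
  An element
  X(lambda) = sum_p lambda^p X_p is encoded as the function  X p j k  = (j,k) entry of the
  coefficient X_p of lambda^p.  Matrix indices run over 0..N-1 (i.e. modulo N).
\<close>

type_synonym lser = "int \<Rightarrow> nat \<Rightarrow> nat \<Rightarrow> complex"

text \<open>The algebra: entries vanish outside 0..N-1, twisting condition
  (Omega X(lambda) Omega^-1 = X(omega lambda), i.e. X_p is supported on j - k = p mod N),
  and only finitely many negative powers of lambda (so that the formal power series
  F^-1 in lambda makes sense).\<close>

definition ghat :: "nat \<Rightarrow> lser set" where
  "ghat N = {X. (\<forall>p j k. (N \<le> j \<or> N \<le> k) \<longrightarrow> X p j k = 0)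
              \<and> (\<forall>p j k. X p j k \<noteq> 0 \<longrightarrow> (int j - int k) mod int N = p mod int N)
              \<and> (\<exists>d. \<forall>p j k. p < d \<longrightarrow> X p j k = 0)}"

definition ladd :: "lser \<Rightarrow> lser \<Rightarrow> lser" where
  "ladd X Y = (\<lambda>p j k. X p j k + Y p j k)"

definition lsub :: "lser \<Rightarrow> lser \<Rightarrow> lser" where
  "lsub X Y = (\<lambda>p j k. X p j k - Y p j k)"

definition lscale :: "complex \<Rightarrow> lser \<Rightarrow> lser" where
  "lscale c X = (\<lambda>p j k. c * X p j k)"

text \<open>Product of Laurent series (the sum over q is finite for series bounded below).\<close>
definition lmul :: "nat \<Rightarrow> lser \<Rightarrow> lser \<Rightarrow> lser" where
  "lmul N X Y = (\<lambda>p j k. \<Sum>q\<in>{q. X q \<noteq> (\<lambda>a b. 0) \<and> Y (p - q) \<noteq> (\<lambda>a b. 0)}.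
                      \<Sum>l<N. X q j l * Y (p - q) l k)"

text \<open>The pairing  <X,Y> = coefficient of lambda^0 in tr(XY).\<close>
definition pair :: "nat \<Rightarrow> lser \<Rightarrow> lser \<Rightarrow> complex" where
  "pair N X Y = (\<Sum>q\<in>{q. X q \<noteq> (\<lambda>a b. 0) \<and> Y (- q) \<noteq> (\<lambda>a b. 0)}.
                   \<Sum>j<N. \<Sum>l<N. X q j l * Y (- q) l j)"

definition lid :: "nat \<Rightarrow> lser" where
  "lid N = (\<lambda>p j k. if p = 0 \<and> j = k \<and> j < N then 1 else 0)"

fun lpow :: "nat \<Rightarrow> lser \<Rightarrow> nat \<Rightarrow> lser" where
  "lpow N X 0 = lid N"
| "lpow N X (Suc n) = lmul N X (lpow N X n)"

definition calE :: "nat \<Rightarrow> lser" where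
  "calE N = (\<lambda>p j k. if p = 1 \<and> j < N \<and> k < N \<and> j = (k + 1) mod N then 1 else 0)"

definition calF :: "nat \<Rightarrow> real \<Rightarrow> lser" where
  "calF N \<alpha> = lsub (lid N) (lscale (complex_of_real \<alpha>) (calE N))"

text \<open>calF^-1 as the formal power series  sum_{n>=0} alpha^n calE^n  in lambda
  (calE^n is homogeneous of degree n, so the coefficient of lambda^p is that of alpha^p calE^p).\<close>
definition calFinv :: "nat \<Rightarrow> real \<Rightarrow> lser" where
  "calFinv N \<alpha> = (\<lambda>p j k. if p < 0 then 0
                     else complex_of_real \<alpha> ^ nat p * lpow N (calE N) (nat p) p j k)"

definition pi_plus :: "lser \<Rightarrow> lser" where
  "pi_plus X = (\<lambda>p j k. if 0 \<le> p then X p j k else 0)"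

definition pi_minus :: "lser \<Rightarrow> lser" where
  "pi_minus X = (\<lambda>p j k. if p < 0 then X p j k else 0)"

definition Rop :: "lser \<Rightarrow> lser" where
  "Rop X = lsub (pi_plus X) (pi_minus X)"

definition brF :: "nat \<Rightarrow> real \<Rightarrow> lser \<Rightarrow> lser \<Rightarrow> lser" where
  "brF N \<alpha> X Y = lsub (lmul N X (lmul N (calF N \<alpha>) Y)) (lmul N Y (lmul N (calF N \<alpha>) X))"

definition has_grad :: "nat \<Rightarrow> (lser \<Rightarrow> complex) \<Rightarrow> lser \<Rightarrow> lser \<Rightarrow> bool" where
  "has_grad N \<phi> L G \<longleftrightarrow> G \<in> ghat N \<and>
     (\<forall>M\<in>ghat N. ((\<lambda>\<epsilon>. \<phi> (ladd L (lscale \<epsilon> M))) has_field_derivative pair N G M) (at 0))"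

definition grad :: "nat \<Rightarrow> (lser \<Rightarrow> complex) \<Rightarrow> lser \<Rightarrow> lser" where
  "grad N \<phi> L = (THE G. has_grad N \<phi> L G)"

definition adm_curve :: "nat \<Rightarrow> (complex \<Rightarrow> lser) \<Rightarrow> bool" where
  "adm_curve N \<gamma> \<longleftrightarrow> (\<forall>s. \<gamma> s \<in> ghat N)
     \<and> (\<exists>d. \<forall>s p j k. p < d \<longrightarrow> \<gamma> s p j k = 0)
     \<and> (\<forall>p j k s. (\<lambda>t. \<gamma> t p j k) field_differentiable (at s))"

definition cderiv :: "(complex \<Rightarrow> lser) \<Rightarrow> complex \<Rightarrow> lser" where
  "cderiv \<gamma> s = (\<lambda>p j k. deriv (\<lambda>t. \<gamma> t p j k) s)"

text \<open>Smooth functions on the algebra: the gradient exists at every point and the chain rule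
  holds along smooth curves (smoothness in the sense of convenient calculus).\<close>
definition smooth_fn :: "nat \<Rightarrow> (lser \<Rightarrow> complex) \<Rightarrow> bool" where
  "smooth_fn N \<phi> \<longleftrightarrow> (\<forall>L\<in>ghat N. \<exists>G. has_grad N \<phi> L G)
     \<and> (\<forall>\<gamma>. adm_curve N \<gamma> \<longrightarrow> (\<forall>s. ((\<lambda>t. \<phi> (\<gamma> t)) has_field_derivative
            pair N (grad N \<phi> (\<gamma> s)) (cderiv \<gamma> s)) (at s)))"

definition ad_inv :: "nat \<Rightarrow> (lser \<Rightarrow> complex) \<Rightarrow> bool" where
  "ad_inv N \<phi> \<longleftrightarrow> smooth_fn N \<phi> \<and>
     (\<forall>L\<in>ghat N. lmul N (grad N \<phi> L) L = lmul N L (grad N \<phi> L))"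

definition PB1 :: "nat \<Rightarrow> real \<Rightarrow> (lser \<Rightarrow> complex) \<Rightarrow> (lser \<Rightarrow> complex) \<Rightarrow> lser \<Rightarrow> complex" where
  "PB1 N \<alpha> \<phi> \<psi> L = (1/2) * pair N
      (ladd (brF N \<alpha> (Rop (grad N \<phi> L)) (grad N \<psi> L))
            (brF N \<alpha> (grad N \<phi> L) (Rop (grad N \<psi> L)))) L"

text \<open>V is the Hamiltonian vector field of H at L:  d/dt f = {H, f}  means
  <grad f(L), V> = {H,f}(L) for every smooth f.\<close>
definition ham_vf :: "nat \<Rightarrow> real \<Rightarrow> (lser \<Rightarrow> complex) \<Rightarrow> lser \<Rightarrow> lser \<Rightarrow> bool" where
  "ham_vf N \<alpha> H L V \<longleftrightarrow> V \<in> ghat N \<and>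
     (\<forall>f. smooth_fn N f \<longrightarrow> PB1 N \<alpha> H f L = pair N (grad N f L) V)"

text \<open>Variable part of an element of T_{m+1}:
  sum_k b_k E_kk + sum_{i=1}^m lambda^-i sum_k a^(i)_k E_{k,k+i}; these form the tangent space.\<close>
definition Tvar :: "nat \<Rightarrow> nat \<Rightarrow> (nat \<Rightarrow> complex) \<Rightarrow> (nat \<Rightarrow> nat \<Rightarrow> complex) \<Rightarrow> lser" where
  "Tvar N m b a = (\<lambda>p j k.
      (if p = 0 \<and> j = k \<and> j < N then b j else 0)
    + (if - int m \<le> p \<and> p \<le> -1 \<and> j < N \<and> k < N \<and> k = (j + nat (- p)) mod N
         then a (nat (- p)) j else 0))"

definition Tdir :: "nat \<Rightarrow> nat \<Rightarrow> lser set" where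
  "Tdir N m = {Tvar N m b a | b a. True}"

definition Tset :: "nat \<Rightarrow> nat \<Rightarrow> lser set" where
  "Tset N m = {ladd (calE N) (Tvar N m b a) | b a. True}"

text \<open>Poisson submanifold (of an affine subspace S = base + D): at every point of S
  every Hamiltonian vector field is tangent to S, i.e. lies in D.\<close>
definition poisson_submanifold ::
  "nat \<Rightarrow> real \<Rightarrow> lser set \<Rightarrow> lser set \<Rightarrow> bool" where
  "poisson_submanifold N \<alpha> S D \<longleftrightarrow>
     (\<forall>H. smooth_fn N H \<longrightarrow> (\<forall>L\<in>S. \<exists>V\<in>D. ham_vf N \<alpha> H L V))"

end

theory Submission
  imports Defs "HOL-Computational_Algebra.Formal_Power_Series"
begin

text \<open>
  Write \<open>A = \<nabla>H(L)\<close>. Moving everything except \<open>\<nabla>f\<close> out of \<open>{H, f}\<^sub>1\<close> gives the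
  Hamiltonian vector field \<open>(1/2) (L R(A) \<F> - \<F> R(A) L) + (1/2) R\<^sup>*(L A \<F> - \<F> A L)\<close>,
  whose coefficients in degrees \<open>\<le> 0\<close> involve only \<open>\<pi>\<^sub>+A\<close> and in degrees \<open>> 0\<close> only
  \<open>\<pi>\<^sub>-A\<close>. For \<open>L \<in> T\<^sub>m\<^sub>+\<^sub>1\<close> the first description bounds the degrees from below by
  \<open>-m\<close>, the second from above by \<open>1\<close>, and in degree \<open>1\<close> the two products agree because
  \<open>L\<close> and \<open>\<F>\<close> have top coefficients \<open>\<E>\<close> and \<open>-\<alpha>\<E>\<close>; this is (a).

  An Ad-invariant \<open>\<phi>\<close> is invariant under conjugation by \<open>\<F>\<close>: along
  \<open>t \<mapsto> (I - t\<alpha>\<E>)\<^sup>-\<^sup>1 L (I - t\<alpha>\<E>)\<close>, a Lax curve, the derivative of \<open>\<phi>\<close> vanishes.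
  Hence \<open>\<phi>(T\<F>\<^sup>-\<^sup>1) = \<phi>(\<F>\<^sup>-\<^sup>1T)\<close>, and for \<open>\<psi>(T) = \<phi>(T\<F>\<^sup>-\<^sup>1)\<close> the gradient
  \<open>A = \<F>\<^sup>-\<^sup>1\<nabla>\<phi>(T\<F>\<^sup>-\<^sup>1)\<close> satisfies \<open>T A \<F> = \<F> A T\<close>. This kills the \<open>R\<^sup>*\<close> term, so the
  flow is \<open>T C\<^sub>2 - C\<^sub>1 T\<close> with \<open>C\<^sub>1 = \<F>B\<close>, \<open>C\<^sub>2 = B\<F>\<close>, \<open>B = (1/2) R(A)\<close>, from which
  the Lax equations for \<open>\<T>\<^sub>1, \<T>\<^sub>2\<close> are algebra; (c) follows since the same commutation
  makes \<open>\<langle>\<nabla>\<psi>\<^sub>2, T C\<^sub>2 - C\<^sub>1 T\<rangle>\<close> vanish.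
\<close>

section \<open>Laurent series bounded below\<close>

definition vanishes_below :: "lser \<Rightarrow> int \<Rightarrow> bool" where
  "vanishes_below X d \<longleftrightarrow> (\<forall>p j k. p < d \<longrightarrow> X p j k = 0)"

definition vanishes_above :: "lser \<Rightarrow> int \<Rightarrow> bool" where
  "vanishes_above X d \<longleftrightarrow> (\<forall>p j k. d < p \<longrightarrow> X p j k = 0)"

definition bounded_below :: "lser \<Rightarrow> bool" where
  "bounded_below X \<longleftrightarrow> (\<exists>d. vanishes_below X d)"

lemma vanishes_belowD: "vanishes_below X d \<Longrightarrow> p < d \<Longrightarrow> X p = (\<lambda>a b. 0)"
  by (auto simp: vanishes_below_def intro!: ext)

lemma vanishes_aboveD: "vanishes_above X d \<Longrightarrow> d < p \<Longrightarrow> X p = (\<lambda>a b. 0)"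
  by (auto simp: vanishes_above_def intro!: ext)

lemma vanishes_below_mono: "vanishes_below X a \<Longrightarrow> b \<le> a \<Longrightarrow> vanishes_below X b"
  by (auto simp: vanishes_below_def)

lemma ladd_apply [simp]: "ladd X Y p j k = X p j k + Y p j k"
  by (simp add: ladd_def)

lemma lsub_apply [simp]: "lsub X Y p j k = X p j k - Y p j k"
  by (simp add: lsub_def)

lemma lscale_apply [simp]: "lscale c X p j k = c * X p j k"
  by (simp add: lscale_def)

lemma pi_plus_apply [simp]: "pi_plus X p j k = (if 0 \<le> p then X p j k else 0)"
  by (simp add: pi_plus_def)

lemma pi_minus_apply [simp]: "pi_minus X p j k = (if p < 0 then X p j k else 0)"
  by (simp add: pi_minus_def)

lemma Rop_apply [simp]: "Rop X p j k = (if 0 \<le> p then X p j k else - X p j k)"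
  by (simp add: Rop_def)

lemma lmul_eq_sum_over:
  assumes "finite Q" and "\<And>q. q \<notin> Q \<Longrightarrow> X q = (\<lambda>a b. 0) \<or> Y (p - q) = (\<lambda>a b. 0)"
  shows "lmul N X Y p j k = (\<Sum>q\<in>Q. \<Sum>l<N. X q j l * Y (p - q) l k)"
  unfolding lmul_def
  by (rule sum.mono_neutral_left) (use assms in auto)

lemma pair_eq_sum_over:
  assumes "finite Q" and "\<And>q. q \<notin> Q \<Longrightarrow> X q = (\<lambda>a b. 0) \<or> Y (- q) = (\<lambda>a b. 0)"
  shows "pair N X Y = (\<Sum>q\<in>Q. \<Sum>j<N. \<Sum>l<N. X q j l * Y (- q) l j)"
  unfolding pair_def
  by (rule sum.mono_neutral_left) (use assms in auto)

lemma lmul_window_superset: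
  assumes "vanishes_below X a" "vanishes_below Y b" "finite Q" "{a..p-b} \<subseteq> Q"
  shows "lmul N X Y p j k = (\<Sum>q\<in>Q. \<Sum>l<N. X q j l * Y (p - q) l k)"
proof (rule lmul_eq_sum_over[OF assms(3)])
  fix q assume "q \<notin> Q"
  then have "q \<notin> {a..p-b}" using assms(4) by blast
  then have "q < a \<or> p - q < b" by auto
  then show "X q = (\<lambda>a b. 0) \<or> Y (p - q) = (\<lambda>a b. 0)"
    using vanishes_belowD[OF assms(1)] vanishes_belowD[OF assms(2)] by blast
qed

lemma lmul_window:
  assumes "vanishes_below X a" "vanishes_below Y b"
  shows "lmul N X Y p j k = (\<Sum>q\<in>{a..p-b}. \<Sum>l<N. X q j l * Y (p - q) l k)"
  by (rule lmul_window_superset[OF assms]) auto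

lemma pair_window:
  assumes "vanishes_below X a" "vanishes_below Y b"
  shows "pair N X Y = (\<Sum>q\<in>{a..-b}. \<Sum>j<N. \<Sum>l<N. X q j l * Y (- q) l j)"
proof (rule pair_eq_sum_over)
  fix q assume "q \<notin> {a..-b}"
  then have "q < a \<or> - q < b" by auto
  then show "X q = (\<lambda>a b. 0) \<or> Y (- q) = (\<lambda>a b. 0)"
    using vanishes_belowD[OF assms(1)] vanishes_belowD[OF assms(2)] by blast
qed simp

lemma vanishes_below_lmul:
  assumes "vanishes_below X a" "vanishes_below Y b"
  shows "vanishes_below (lmul N X Y) (a + b)"
  unfolding vanishes_below_def by (simp add: lmul_window[OF assms])

lemma vanishes_above_lmul:
  assumes "vanishes_above X a" "vanishes_above Y b"
  shows "vanishes_above (lmul N X Y) (a + b)"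
  unfolding vanishes_above_def
proof (intro allI impI)
  fix p j k assume p: "a + b < p"
  have "lmul N X Y p j k = (\<Sum>q\<in>{}. \<Sum>l<N. X q j l * Y (p - q) l k)"
  proof (rule lmul_eq_sum_over)
    fix q
    have "a < q \<or> b < p - q" using p by auto
    then show "X q = (\<lambda>a b. 0) \<or> Y (p - q) = (\<lambda>a b. 0)"
      using vanishes_aboveD[OF assms(1)] vanishes_aboveD[OF assms(2)] by blast
  qed simp
  then show "lmul N X Y p j k = 0" by simp
qed

lemma lmul_top_coeff:
  assumes "vanishes_above X a" "vanishes_above Y b"
  shows "lmul N X Y (a + b) j k = (\<Sum>l<N. X a j l * Y b l k)"
proof -
  have "lmul N X Y (a + b) j k = (\<Sum>q\<in>{a}. \<Sum>l<N. X q j l * Y (a + b - q) l k)"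
  proof (rule lmul_eq_sum_over)
    fix q assume "q \<notin> {a}"
    then have "a < q \<or> b < a + b - q" by auto
    then show "X q = (\<lambda>a b. 0) \<or> Y (a + b - q) = (\<lambda>a b. 0)"
      using vanishes_aboveD[OF assms(1)] vanishes_aboveD[OF assms(2)] by blast
  qed simp
  then show ?thesis by simp
qed

lemma sum_reorder4:
  "(\<Sum>a\<in>A. \<Sum>b\<in>B. \<Sum>c\<in>C. \<Sum>d\<in>D. f a b c d) = (\<Sum>c\<in>C. \<Sum>d\<in>D. \<Sum>a\<in>A. \<Sum>b\<in>B. f a b c d)"
proof -
  have "(\<Sum>a\<in>A. \<Sum>b\<in>B. \<Sum>c\<in>C. \<Sum>d\<in>D. f a b c d) = (\<Sum>a\<in>A. \<Sum>c\<in>C. \<Sum>b\<in>B. \<Sum>d\<in>D. f a b c d)"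
    by (rule sum.cong[OF refl], rule sum.swap)
  also have "\<dots> = (\<Sum>a\<in>A. \<Sum>c\<in>C. \<Sum>d\<in>D. \<Sum>b\<in>B. f a b c d)"
    by (rule sum.cong[OF refl], rule sum.cong[OF refl], rule sum.swap)
  also have "\<dots> = (\<Sum>c\<in>C. \<Sum>a\<in>A. \<Sum>d\<in>D. \<Sum>b\<in>B. f a b c d)"
    by (rule sum.swap)
  also have "\<dots> = (\<Sum>c\<in>C. \<Sum>d\<in>D. \<Sum>a\<in>A. \<Sum>b\<in>B. f a b c d)"
    by (rule sum.cong[OF refl], rule sum.swap)
  finally show ?thesis .
qed

lemma lmul_assoc_window:
  assumes X: "vanishes_below X a" and Y: "vanishes_below Y b" and Z: "vanishes_below Z c"
  shows "lmul N (lmul N X Y) Z = lmul N X (lmul N Y Z)"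
proof (intro ext)
  fix p j k
  define Iq where "Iq = {a+b..p-c}"
  define Ir where "Ir = {a..p-b-c}"
  have "lmul N (lmul N X Y) Z p j k
      = (\<Sum>q\<in>Iq. \<Sum>l<N. (\<Sum>r\<in>Ir. \<Sum>l'<N. X r j l' * Y (q - r) l' l) * Z (p - q) l k)"
    unfolding lmul_window[OF vanishes_below_lmul[OF X Y] Z, folded Iq_def]
    by (intro sum.cong refl arg_cong2[where f = "(*)"] lmul_window_superset[OF X Y])
      (auto simp: Iq_def Ir_def)
  also have "\<dots> = (\<Sum>q\<in>Iq. \<Sum>l<N. \<Sum>r\<in>Ir. \<Sum>l'<N. X r j l' * Y (q - r) l' l * Z (p - q) l k)"
    by (simp add: sum_distrib_right)
  also have "\<dots> = (\<Sum>r\<in>Ir. \<Sum>l'<N. \<Sum>q\<in>Iq. \<Sum>l<N. X r j l' * Y (q - r) l' l * Z (p - q) l k)"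
    by (rule sum_reorder4)
  also have "\<dots> = (\<Sum>r\<in>Ir. \<Sum>l'<N. X r j l' * (\<Sum>q\<in>Iq. \<Sum>l<N. Y (q - r) l' l * Z (p - q) l k))"
    by (simp add: sum_distrib_left mult.assoc)
  also have "\<dots> = (\<Sum>r\<in>Ir. \<Sum>l'<N. X r j l' * lmul N Y Z (p - r) l' k)"
  proof (intro sum.cong refl arg_cong2[where f = "(*)"])
    fix r l' assume r: "r \<in> Ir"
    have "lmul N Y Z (p - r) l' k = (\<Sum>q\<in>(\<lambda>q. q - r) ` Iq. \<Sum>l<N. Y q l' l * Z (p - r - q) l k)"
    proof (rule lmul_eq_sum_over)
      fix q assume "q \<notin> (\<lambda>q. q - r) ` Iq"
      then have "q + r \<notin> Iq" by force
      then have "q < b \<or> p - r - q < c" using r by (auto simp: Iq_def Ir_def)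
      then show "Y q = (\<lambda>a b. 0) \<or> Z (p - r - q) = (\<lambda>a b. 0)"
        using vanishes_belowD[OF Y] vanishes_belowD[OF Z] by blast
    qed (simp add: Iq_def)
    also have "\<dots> = (\<Sum>q\<in>Iq. \<Sum>l<N. Y (q - r) l' l * Z (p - q) l k)"
      by (subst sum.reindex) (auto simp: inj_on_def)
    finally show "(\<Sum>q\<in>Iq. \<Sum>l<N. Y (q - r) l' l * Z (p - q) l k) = lmul N Y Z (p - r) l' k" ..
  qed
  also have "\<dots> = lmul N X (lmul N Y Z) p j k"
    unfolding lmul_window[OF X vanishes_below_lmul[OF Y Z]] Ir_def by (simp add: algebra_simps)
  finally show "lmul N (lmul N X Y) Z p j k = lmul N X (lmul N Y Z) p j k" .
qed

lemma bounded_belowE: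
  assumes "bounded_below X" obtains d where "vanishes_below X d"
  using assms unfolding bounded_below_def by blast

lemma common_lower_bound2:
  assumes "bounded_below X" "bounded_below Y"
  obtains d where "vanishes_below X d" "vanishes_below Y d"
proof -
  obtain a b where "vanishes_below X a" "vanishes_below Y b"
    using assms by (meson bounded_belowE)
  then show ?thesis
    using that[of "min a b"] by (meson vanishes_below_mono min.cobounded1 min.cobounded2)
qed

lemma common_lower_bound3:
  assumes "bounded_below X" "bounded_below Y" "bounded_below Z"
  obtains d where "vanishes_below X d" "vanishes_below Y d" "vanishes_below Z d"
proof -
  obtain a b where "vanishes_below X a" "vanishes_below Y a" "vanishes_below Z b"
    using assms by (meson bounded_belowE common_lower_bound2)
  then show ?thesis
    using that[of "min a b"] by (meson vanishes_below_mono min.cobounded1 min.cobounded2)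
qed

lemma bounded_below_lmul [simp]:
  "bounded_below X \<Longrightarrow> bounded_below Y \<Longrightarrow> bounded_below (lmul N X Y)"
  unfolding bounded_below_def using vanishes_below_lmul by blast

lemma bounded_below_ladd [simp]:
  assumes "bounded_below X" "bounded_below Y" shows "bounded_below (ladd X Y)"
proof -
  obtain d where "vanishes_below X d" "vanishes_below Y d"
    using assms by (rule common_lower_bound2)
  then show ?thesis unfolding bounded_below_def vanishes_below_def by (intro exI[of _ d]) auto
qed

lemma bounded_below_lsub [simp]:
  assumes "bounded_below X" "bounded_below Y" shows "bounded_below (lsub X Y)"
proof -
  obtain d where "vanishes_below X d" "vanishes_below Y d"
    using assms by (rule common_lower_bound2)
  then show ?thesis unfolding bounded_below_def vanishes_below_def by (intro exI[of _ d]) auto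
qed

lemma bounded_below_lscale [simp]: "bounded_below X \<Longrightarrow> bounded_below (lscale c X)"
  unfolding bounded_below_def vanishes_below_def by auto

lemma bounded_below_Rop [simp]: "bounded_below X \<Longrightarrow> bounded_below (Rop X)"
  unfolding bounded_below_def vanishes_below_def by auto

lemma bounded_below_pi_plus [simp]: "bounded_below X \<Longrightarrow> bounded_below (pi_plus X)"
  unfolding bounded_below_def vanishes_below_def by auto

lemma bounded_below_pi_minus [simp]: "bounded_below X \<Longrightarrow> bounded_below (pi_minus X)"
  unfolding bounded_below_def vanishes_below_def by auto

lemma bounded_below_lid [simp]: "bounded_below (lid N)"
  unfolding bounded_below_def vanishes_below_def lid_def by (auto intro: exI[of _ 0])

lemma lmul_assoc:
  "bounded_below X \<Longrightarrow> bounded_below Y \<Longrightarrow> bounded_below Z \<Longrightarrow>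
    lmul N (lmul N X Y) Z = lmul N X (lmul N Y Z)"
  by (metis common_lower_bound3 lmul_assoc_window)

lemma lmul_ladd_left:
  assumes "bounded_below X" "bounded_below Y" "bounded_below Z"
  shows "lmul N (ladd X Y) Z = ladd (lmul N X Z) (lmul N Y Z)"
proof -
  obtain d where d: "vanishes_below X d" "vanishes_below Y d" "vanishes_below Z d"
    using assms by (rule common_lower_bound3)
  then have "vanishes_below (ladd X Y) d" by (simp add: vanishes_below_def)
  with d show ?thesis
    by (auto simp: fun_eq_iff lmul_window sum.distrib distrib_right)
qed

lemma lmul_ladd_right:
  assumes "bounded_below X" "bounded_below Y" "bounded_below Z"
  shows "lmul N X (ladd Y Z) = ladd (lmul N X Y) (lmul N X Z)"
proof -
  obtain d where d: "vanishes_below X d" "vanishes_below Y d" "vanishes_below Z d"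
    using assms by (rule common_lower_bound3)
  then have "vanishes_below (ladd Y Z) d" by (simp add: vanishes_below_def)
  with d show ?thesis
    by (auto simp: fun_eq_iff lmul_window sum.distrib distrib_left)
qed

lemma lmul_lsub_left:
  assumes "bounded_below X" "bounded_below Y" "bounded_below Z"
  shows "lmul N (lsub X Y) Z = lsub (lmul N X Z) (lmul N Y Z)"
proof -
  obtain d where d: "vanishes_below X d" "vanishes_below Y d" "vanishes_below Z d"
    using assms by (rule common_lower_bound3)
  then have "vanishes_below (lsub X Y) d" by (simp add: vanishes_below_def)
  with d show ?thesis
    by (auto simp: fun_eq_iff lmul_window sum_subtractf left_diff_distrib)
qed

lemma lmul_lsub_right:
  assumes "bounded_below X" "bounded_below Y" "bounded_below Z"
  shows "lmul N X (lsub Y Z) = lsub (lmul N X Y) (lmul N X Z)"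
proof -
  obtain d where d: "vanishes_below X d" "vanishes_below Y d" "vanishes_below Z d"
    using assms by (rule common_lower_bound3)
  then have "vanishes_below (lsub Y Z) d" by (simp add: vanishes_below_def)
  with d show ?thesis
    by (auto simp: fun_eq_iff lmul_window sum_subtractf right_diff_distrib)
qed

lemma lmul_lscale_left:
  assumes "bounded_below X" "bounded_below Y"
  shows "lmul N (lscale c X) Y = lscale c (lmul N X Y)"
proof -
  obtain d where d: "vanishes_below X d" "vanishes_below Y d"
    using assms by (rule common_lower_bound2)
  then have "vanishes_below (lscale c X) d" by (simp add: vanishes_below_def)
  with d show ?thesis
    by (auto simp: fun_eq_iff lmul_window sum_distrib_left mult.assoc)
qed

lemma lmul_lscale_right:
  assumes "bounded_below X" "bounded_below Y"
  shows "lmul N X (lscale c Y) = lscale c (lmul N X Y)"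
proof -
  obtain d where d: "vanishes_below X d" "vanishes_below Y d"
    using assms by (rule common_lower_bound2)
  then have "vanishes_below (lscale c Y) d" by (simp add: vanishes_below_def)
  with d show ?thesis
    by (auto simp: fun_eq_iff lmul_window sum_distrib_left algebra_simps)
qed

definition supported_in :: "nat \<Rightarrow> lser \<Rightarrow> bool" where
  "supported_in N X \<longleftrightarrow> (\<forall>p j k. (N \<le> j \<or> N \<le> k) \<longrightarrow> X p j k = 0)"

lemma lmul_lid_left: "supported_in N X \<Longrightarrow> lmul N (lid N) X = X"
proof (intro ext)
  fix p j k assume X: "supported_in N X"
  have "lmul N (lid N) X p j k = (\<Sum>q\<in>{0}. \<Sum>l<N. lid N q j l * X (p - q) l k)"
    by (rule lmul_eq_sum_over) (auto simp: lid_def fun_eq_iff)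
  also have "\<dots> = X p j k"
    using X by (cases "j < N")
      (simp_all add: lid_def supported_in_def if_distrib[of "\<lambda>x. x * _"] cong: if_cong)
  finally show "lmul N (lid N) X p j k = X p j k" .
qed

lemma lmul_lid_right: "supported_in N X \<Longrightarrow> lmul N X (lid N) = X"
proof (intro ext)
  fix p j k assume X: "supported_in N X"
  have "lmul N X (lid N) p j k = (\<Sum>q\<in>{p}. \<Sum>l<N. X q j l * lid N (p - q) l k)"
    by (rule lmul_eq_sum_over) (auto simp: lid_def fun_eq_iff)
  also have "\<dots> = X p j k"
    using X by (cases "k < N")
      (simp_all add: lid_def supported_in_def if_distrib[of "\<lambda>x. _ * x"] cong: if_cong)
  finally show "lmul N X (lid N) p j k = X p j k" .
qed

section \<open>The trace pairing\<close>

definition trace0 :: "nat \<Rightarrow> lser \<Rightarrow> complex" where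
  "trace0 N Z = (\<Sum>j<N. Z 0 j j)"

lemma pair_eq_trace0:
  assumes "bounded_below X" "bounded_below Y"
  shows "pair N X Y = trace0 N (lmul N X Y)"
proof -
  obtain d where d: "vanishes_below X d" "vanishes_below Y d"
    using assms by (rule common_lower_bound2)
  have "pair N X Y = (\<Sum>q\<in>{d..-d}. \<Sum>j<N. \<Sum>l<N. X q j l * Y (- q) l j)"
    by (rule pair_window[OF d])
  also have "\<dots> = (\<Sum>j<N. \<Sum>q\<in>{d..0-d}. \<Sum>l<N. X q j l * Y (0 - q) l j)"
    by (simp add: sum.swap[of _ "{d..-d}"])
  finally show ?thesis
    unfolding trace0_def by (simp add: lmul_window[OF d])
qed

lemma pair_commute:
  assumes "bounded_below X" "bounded_below Y"
  shows "pair N X Y = pair N Y X"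
proof -
  obtain d where d: "vanishes_below X d" "vanishes_below Y d"
    using assms by (rule common_lower_bound2)
  have "pair N X Y = (\<Sum>q\<in>{d..-d}. \<Sum>j<N. \<Sum>l<N. X q j l * Y (- q) l j)"
    by (rule pair_window[OF d])
  also have "\<dots> = (\<Sum>q\<in>uminus ` {d..-d}. \<Sum>j<N. \<Sum>l<N. X (- q) j l * Y q l j)"
    by (subst sum.reindex) (auto simp: inj_on_def)
  also have "uminus ` {d..-d} = {d..-d::int}"
    by (auto simp: image_iff intro!: exI[of _ "- _"])
  also have "(\<Sum>q\<in>{d..-d}. \<Sum>j<N. \<Sum>l<N. X (- q) j l * Y q l j)
      = (\<Sum>q\<in>{d..-d}. \<Sum>j<N. \<Sum>l<N. Y q j l * X (- q) l j)"
    by (subst (2) sum.swap) (simp add: mult.commute)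
  also have "\<dots> = pair N Y X"
    by (rule pair_window[OF d(2,1), symmetric])
  finally show ?thesis .
qed

lemma pair_lmul_assoc:
  "bounded_below X \<Longrightarrow> bounded_below Y \<Longrightarrow> bounded_below Z \<Longrightarrow>
    pair N X (lmul N Y Z) = pair N (lmul N X Y) Z"
  by (simp add: pair_eq_trace0 lmul_assoc)

lemma pair_ladd_left:
  "bounded_below X \<Longrightarrow> bounded_below Y \<Longrightarrow> bounded_below Z \<Longrightarrow>
    pair N (ladd X Y) Z = pair N X Z + pair N Y Z"
  by (simp add: pair_eq_trace0 lmul_ladd_left trace0_def sum.distrib)

lemma pair_lsub_left:
  "bounded_below X \<Longrightarrow> bounded_below Y \<Longrightarrow> bounded_below Z \<Longrightarrow>
    pair N (lsub X Y) Z = pair N X Z - pair N Y Z"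
  by (simp add: pair_eq_trace0 lmul_lsub_left trace0_def sum_subtractf)

lemma pair_lscale_left:
  "bounded_below X \<Longrightarrow> bounded_below Z \<Longrightarrow> pair N (lscale c X) Z = c * pair N X Z"
  by (simp add: pair_eq_trace0 lmul_lscale_left trace0_def sum_distrib_left)

lemma pair_ladd_right:
  "bounded_below X \<Longrightarrow> bounded_below Y \<Longrightarrow> bounded_below Z \<Longrightarrow>
    pair N Z (ladd X Y) = pair N Z X + pair N Z Y"
  by (simp add: pair_commute[of Z] pair_ladd_left)

lemma pair_lsub_right:
  "bounded_below X \<Longrightarrow> bounded_below Y \<Longrightarrow> bounded_below Z \<Longrightarrow>
    pair N Z (lsub X Y) = pair N Z X - pair N Z Y"
  by (simp add: pair_commute[of Z] pair_lsub_left)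

lemma pair_lscale_right:
  "bounded_below X \<Longrightarrow> bounded_below Z \<Longrightarrow> pair N Z (lscale c X) = c * pair N Z X"
  by (simp add: pair_commute[of Z] pair_lscale_left)

lemma pair_cyclic:
  "bounded_below X \<Longrightarrow> bounded_below Y \<Longrightarrow> bounded_below Z \<Longrightarrow>
    pair N X (lmul N Y Z) = pair N Y (lmul N Z X)"
  by (metis bounded_below_lmul pair_commute pair_lmul_assoc)

text \<open>The adjoint of \<^const>\<open>Rop\<close>: degree \<open>p\<close> pairs with degree \<open>-p\<close>.\<close>

definition Rop_adj :: "lser \<Rightarrow> lser" where
  "Rop_adj Z = (\<lambda>p j k. if p \<le> 0 then Z p j k else - Z p j k)"

lemma bounded_below_Rop_adj [simp]: "bounded_below X \<Longrightarrow> bounded_below (Rop_adj X)"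
  unfolding bounded_below_def vanishes_below_def Rop_adj_def by auto

lemma Rop_adj_lsub: "Rop_adj (lsub X Y) = lsub (Rop_adj X) (Rop_adj Y)"
  by (auto simp: Rop_adj_def fun_eq_iff)

lemma pair_Rop_left:
  assumes "bounded_below B" "bounded_below Z"
  shows "pair N (Rop B) Z = pair N B (Rop_adj Z)"
proof -
  obtain d where d: "vanishes_below B d" "vanishes_below Z d"
    using assms by (rule common_lower_bound2)
  have "vanishes_below (Rop B) d" "vanishes_below (Rop_adj Z) d"
    using d unfolding vanishes_below_def Rop_adj_def by auto
  with d show ?thesis
    by (simp add: pair_window) (auto simp: Rop_adj_def intro!: sum.cong)
qed

definition twisted :: "nat \<Rightarrow> lser \<Rightarrow> bool" where
  "twisted N X \<longleftrightarrow> (\<forall>p j k. X p j k \<noteq> 0 \<longrightarrow> (int j - int k) mod int N = p mod int N)"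

lemma ghat_iff: "X \<in> ghat N \<longleftrightarrow> supported_in N X \<and> twisted N X \<and> bounded_below X"
  unfolding ghat_def supported_in_def twisted_def bounded_below_def vanishes_below_def by auto

lemma ghat_bounded_below [simp]: "X \<in> ghat N \<Longrightarrow> bounded_below X"
  by (simp add: ghat_iff)

lemma ghat_supported_in [simp]: "X \<in> ghat N \<Longrightarrow> supported_in N X"
  by (simp add: ghat_iff)

lemma mod_diff_commute_neg:
  "(a - b) mod n = p mod n \<Longrightarrow> (b - a) mod n = (- p) mod (n::int)"
  by (metis minus_diff_eq mod_minus_eq)

lemma mod_diff_solve:
  "0 \<le> a \<Longrightarrow> a < n \<Longrightarrow> (a - b) mod n = p mod n \<Longrightarrow> a = (b + p) mod (n::int)"
  by (metis add.commute diff_add_cancel mod_add_left_eq mod_pos_pos_trivial)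

lemma twisted_lmul:
  assumes "twisted N X" "twisted N Y" shows "twisted N (lmul N X Y)"
  unfolding twisted_def
proof (intro allI impI)
  fix p j k assume "lmul N X Y p j k \<noteq> 0"
  then obtain q where "(\<Sum>l<N. X q j l * Y (p - q) l k) \<noteq> 0"
    unfolding lmul_def using sum.not_neutral_contains_not_neutral by blast
  then obtain l where "X q j l * Y (p - q) l k \<noteq> 0"
    using sum.not_neutral_contains_not_neutral by blast
  then have "(int j - int l) mod int N = q mod int N"
    and "(int l - int k) mod int N = (p - q) mod int N"
    using assms unfolding twisted_def by auto
  then have "((int j - int l) + (int l - int k)) mod int N = (q + (p - q)) mod int N"
    by (metis mod_add_eq)
  then show "(int j - int k) mod int N = p mod int N" by simp
qed

lemma supported_in_lmul:
  "supported_in N X \<Longrightarrow> supported_in N Y \<Longrightarrow> supported_in N (lmul N X Y)"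
  by (simp add: supported_in_def lmul_def)

lemma ghat_lmul [simp]: "X \<in> ghat N \<Longrightarrow> Y \<in> ghat N \<Longrightarrow> lmul N X Y \<in> ghat N"
  unfolding ghat_iff by (simp add: twisted_lmul supported_in_lmul)

lemma twisted_ladd:
  assumes "twisted N X" "twisted N Y" shows "twisted N (ladd X Y)"
  unfolding twisted_def
proof (intro allI impI)
  fix p j k assume "ladd X Y p j k \<noteq> 0"
  then have "X p j k \<noteq> 0 \<or> Y p j k \<noteq> 0" by auto
  then show "(int j - int k) mod int N = p mod int N"
    using assms unfolding twisted_def by blast
qed

lemma twisted_lsub:
  assumes "twisted N X" "twisted N Y" shows "twisted N (lsub X Y)"
  unfolding twisted_def
proof (intro allI impI)
  fix p j k assume "lsub X Y p j k \<noteq> 0"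
  then have "X p j k \<noteq> 0 \<or> Y p j k \<noteq> 0" by auto
  then show "(int j - int k) mod int N = p mod int N"
    using assms unfolding twisted_def by blast
qed

lemma ghat_ladd [simp]: "X \<in> ghat N \<Longrightarrow> Y \<in> ghat N \<Longrightarrow> ladd X Y \<in> ghat N"
  unfolding ghat_iff by (simp add: twisted_ladd supported_in_def)

lemma ghat_lsub [simp]: "X \<in> ghat N \<Longrightarrow> Y \<in> ghat N \<Longrightarrow> lsub X Y \<in> ghat N"
  unfolding ghat_iff by (simp add: twisted_lsub supported_in_def)

lemma ghat_lscale [simp]: "X \<in> ghat N \<Longrightarrow> lscale c X \<in> ghat N"
  unfolding ghat_iff supported_in_def twisted_def by auto

lemma ghat_Rop [simp]: "X \<in> ghat N \<Longrightarrow> Rop X \<in> ghat N"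
  unfolding ghat_iff supported_in_def twisted_def by auto

lemma ghat_Rop_adj [simp]: "X \<in> ghat N \<Longrightarrow> Rop_adj X \<in> ghat N"
  using bounded_below_Rop_adj[of X]
  unfolding ghat_iff supported_in_def twisted_def by (auto simp: Rop_adj_def)

lemma ghat_lid [simp]: "lid N \<in> ghat N"
  using bounded_below_lid[of N]
  unfolding ghat_iff supported_in_def twisted_def by (auto simp: lid_def)

lemma pair_matrix_unit:
  assumes "j < N" "k < N"
  shows "pair N G (\<lambda>q a b. if q = - p \<and> a = k \<and> b = j then 1 else 0) = G p j k"
proof -
  have "pair N G (\<lambda>q a b. if q = - p \<and> a = k \<and> b = j then 1 else 0)
      = (\<Sum>q\<in>{p}. \<Sum>a<N. \<Sum>b<N. G q a b * (if - q = - p \<and> b = k \<and> a = j then 1 else 0))"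
    by (rule pair_eq_sum_over) (auto simp: fun_eq_iff)
  also have "\<dots> = (\<Sum>a<N. \<Sum>b<N. G p a b * (if b = k \<and> a = j then 1 else 0))"
    by simp
  also have "\<dots> = (\<Sum>a<N. if a = j then G p a k else 0)"
    using assms(2) by (intro sum.cong refl) (auto simp: if_distrib[of "\<lambda>x. _ * x"] cong: if_cong)
  also have "\<dots> = G p j k"
    using assms(1) by simp
  finally show ?thesis .
qed

lemma pair_nondegenerate:
  assumes G: "G \<in> ghat N" and orth: "\<And>M. M \<in> ghat N \<Longrightarrow> pair N G M = 0"
  shows "G = (\<lambda>p j k. 0)"
proof (intro ext)
  fix p j k
  show "G p j k = 0"
  proof (rule ccontr)
    assume nz: "G p j k \<noteq> 0"
    then have jk: "j < N" "k < N"
      using G unfolding ghat_iff supported_in_def by (meson not_le)+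
    have "(int j - int k) mod int N = p mod int N"
      using G nz unfolding ghat_iff twisted_def by auto
    then have "(int k - int j) mod int N = (- p) mod int N"
      by (rule mod_diff_commute_neg)
    then have "(\<lambda>q a b. if q = - p \<and> a = k \<and> b = j then 1 else 0) \<in> ghat N"
      using jk unfolding ghat_iff supported_in_def twisted_def bounded_below_def vanishes_below_def
      by (auto intro!: exI[of _ "- p"])
    then have "pair N G (\<lambda>q a b. if q = - p \<and> a = k \<and> b = j then 1 else 0) = 0"
      by (rule orth)
    then show False
      using pair_matrix_unit[OF jk, of G p] nz by simp
  qed
qed

lemma has_grad_unique:
  assumes "has_grad N \<phi> L G" "has_grad N \<phi> L G'" shows "G' = G"
proof -
  have G: "G \<in> ghat N" and G': "G' \<in> ghat N"
    using assms unfolding has_grad_def by auto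
  have "lsub G' G = (\<lambda>p j k. 0)"
  proof (rule pair_nondegenerate)
    fix M assume M: "M \<in> ghat N"
    have "pair N G M = pair N G' M"
      using assms M unfolding has_grad_def by (meson DERIV_unique)
    then show "pair N (lsub G' G) M = 0"
      using G G' M by (simp add: pair_lsub_left)
  qed (use G G' in simp)
  then show ?thesis by (auto simp: fun_eq_iff)
qed

lemma grad_eqI: "has_grad N \<phi> L G \<Longrightarrow> grad N \<phi> L = G"
  unfolding grad_def by (rule the_equality) (auto intro: has_grad_unique)

lemma smooth_fn_has_grad: "smooth_fn N \<phi> \<Longrightarrow> L \<in> ghat N \<Longrightarrow> has_grad N \<phi> L (grad N \<phi> L)"
  unfolding smooth_fn_def by (metis grad_eqI)

lemma grad_in_ghat [simp]: "smooth_fn N \<phi> \<Longrightarrow> L \<in> ghat N \<Longrightarrow> grad N \<phi> L \<in> ghat N"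
  using smooth_fn_has_grad has_grad_def by blast

section \<open>Power series in the shift\<close>

text \<open>\<open>shift_pow N n\<close> is the \<open>n\<close>-th power of the cyclic shift \<open>\<Sum>\<^sub>k E\<^sub>k\<^sub>+\<^sub>1\<^sub>,\<^sub>k\<close>, so that
  \<open>of_fps N f = f(\<E>)\<close> (see \<open>of_fps_X\<close> and \<open>of_fps_mult\<close>).\<close>

definition shift_pow :: "nat \<Rightarrow> nat \<Rightarrow> nat \<Rightarrow> nat \<Rightarrow> complex" where
  "shift_pow N n j k = (if j < N \<and> k < N \<and> j = (k + n) mod N then 1 else 0)"

definition of_fps :: "nat \<Rightarrow> complex fps \<Rightarrow> lser" where
  "of_fps N f = (\<lambda>p j k. if p < 0 then 0 else fps_nth f (nat p) * shift_pow N (nat p) j k)"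

lemma vanishes_below_of_fps: "vanishes_below (of_fps N f) 0"
  unfolding vanishes_below_def of_fps_def by auto

lemma bounded_below_of_fps [simp]: "bounded_below (of_fps N f)"
  using vanishes_below_of_fps unfolding bounded_below_def by blast

lemma ghat_of_fps [simp]: "of_fps N f \<in> ghat N"
  unfolding ghat_iff
proof (intro conjI)
  show "supported_in N (of_fps N f)"
    unfolding supported_in_def of_fps_def shift_pow_def by auto
  show "bounded_below (of_fps N f)" by simp
  show "twisted N (of_fps N f)"
    unfolding twisted_def
  proof (intro allI impI)
    fix p j k assume "of_fps N f p j k \<noteq> 0"
    then have "0 \<le> p" and "j = (k + nat p) mod N"
      unfolding of_fps_def shift_pow_def by (auto split: if_splits)
    then have "int j = (int k + p) mod int N" by (simp add: zmod_int)
    then show "(int j - int k) mod int N = p mod int N" by (simp add: mod_diff_left_eq)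
  qed
qed

lemma shift_pow_mult: "(\<Sum>l<N. shift_pow N a j l * shift_pow N b l k) = shift_pow N (a + b) j k"
proof (cases "k < N")
  case True
  have "(\<Sum>l<N. shift_pow N a j l * shift_pow N b l k)
      = (\<Sum>l<N. if l = (k + b) mod N then shift_pow N a j l else 0)"
    by (rule sum.cong) (auto simp: shift_pow_def True)
  also have "\<dots> = shift_pow N a j ((k + b) mod N)"
    using True by simp
  also have "\<dots> = shift_pow N (a + b) j k"
  proof -
    have "((k + b) mod N + a) mod N = (k + (a + b)) mod N"
      by (metis add.assoc add.commute mod_add_left_eq)
    then show ?thesis using True by (simp add: shift_pow_def)
  qed
  finally show ?thesis .
qed (simp add: shift_pow_def)

lemma of_fps_mult: "lmul N (of_fps N f) (of_fps N g) = of_fps N (f * g)"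
proof (intro ext)
  fix p j k
  have "lmul N (of_fps N f) (of_fps N g) p j k
      = (\<Sum>q\<in>{0..p}. \<Sum>l<N. of_fps N f q j l * of_fps N g (p - q) l k)"
    using lmul_window[OF vanishes_below_of_fps vanishes_below_of_fps] by simp
  also have "\<dots> = (\<Sum>q\<in>{0..p}. fps_nth f (nat q) * fps_nth g (nat (p - q))) * shift_pow N (nat p) j k"
    unfolding sum_distrib_right
  proof (rule sum.cong[OF refl])
    fix q assume q: "q \<in> {0..p}"
    then have "(\<Sum>l<N. of_fps N f q j l * of_fps N g (p - q) l k)
        = fps_nth f (nat q) * fps_nth g (nat (p - q))
          * (\<Sum>l<N. shift_pow N (nat q) j l * shift_pow N (nat (p - q)) l k)"
      by (simp add: of_fps_def sum_distrib_left mult_ac)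
    moreover have "nat q + nat (p - q) = nat p" using q by auto
    ultimately show "(\<Sum>l<N. of_fps N f q j l * of_fps N g (p - q) l k)
        = fps_nth f (nat q) * fps_nth g (nat (p - q)) * shift_pow N (nat p) j k"
      by (simp add: shift_pow_mult)
  qed
  also have "\<dots> = of_fps N (f * g) p j k"
  proof (cases "p < 0")
    case False
    have "(\<Sum>q\<in>{0..p}. fps_nth f (nat q) * fps_nth g (nat (p - q)))
        = (\<Sum>i\<in>{0..nat p}. fps_nth f i * fps_nth g (nat p - i))"
      by (rule sum.reindex_bij_witness[of _ int nat]) (use False in \<open>auto simp: nat_diff_distrib\<close>)
    with False show ?thesis by (simp add: of_fps_def fps_mult_nth)
  qed (simp add: of_fps_def)
  finally show "lmul N (of_fps N f) (of_fps N g) p j k = of_fps N (f * g) p j k" .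
qed

lemma of_fps_one: "of_fps N 1 = lid N"
  by (auto simp: of_fps_def lid_def shift_pow_def fun_eq_iff)

lemma of_fps_X: "of_fps N fps_X = calE N"
  by (auto simp: of_fps_def calE_def shift_pow_def fun_eq_iff)

lemma of_fps_diff: "of_fps N (f - g) = lsub (of_fps N f) (of_fps N g)"
  by (auto simp: of_fps_def fun_eq_iff algebra_simps)

lemma of_fps_const_mult: "of_fps N (fps_const c * f) = lscale c (of_fps N f)"
  by (auto simp: of_fps_def fun_eq_iff)

lemma of_fps_uminus: "of_fps N (- f) = lscale (-1) (of_fps N f)"
  by (auto simp: of_fps_def fun_eq_iff)

lemma lpow_calE: "lpow N (calE N) n = of_fps N (fps_X ^ n)"
  by (induction n) (simp_all add: of_fps_one of_fps_X[symmetric] of_fps_mult)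

definition geometric_fps :: "complex \<Rightarrow> complex fps" where
  "geometric_fps c = Abs_fps (\<lambda>n. c ^ n)"

lemma geometric_fps_nth [simp]: "fps_nth (geometric_fps c) n = c ^ n"
  by (simp add: geometric_fps_def)

lemma geometric_fps_inverse: "(1 - fps_const c * fps_X) * geometric_fps c = 1"
proof (rule fps_ext)
  fix n show "fps_nth ((1 - fps_const c * fps_X) * geometric_fps c) n = fps_nth 1 n"
    by (cases n) (simp_all add: algebra_simps mult.assoc fps_X_mult_nth)
qed

lemma geometric_fps_inverse': "geometric_fps c * (1 - fps_const c * fps_X) = 1"
  using geometric_fps_inverse by (simp add: mult.commute)

lemma geometric_fps_zero: "geometric_fps 0 = 1"
  by (rule fps_ext) simp

lemma calF_eq_of_fps: "calF N \<alpha> = of_fps N (1 - fps_const (complex_of_real \<alpha>) * fps_X)"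
  by (simp add: calF_def of_fps_diff of_fps_one of_fps_const_mult of_fps_X)

lemma calFinv_eq_of_fps: "calFinv N \<alpha> = of_fps N (geometric_fps (complex_of_real \<alpha>))"
  by (auto simp: calFinv_def of_fps_def lpow_calE fun_eq_iff)

lemma ghat_calF [simp]: "calF N \<alpha> \<in> ghat N"
  by (simp add: calF_eq_of_fps)

lemma ghat_calFinv [simp]: "calFinv N \<alpha> \<in> ghat N"
  by (simp add: calFinv_eq_of_fps)

lemma bounded_below_calF [simp]: "bounded_below (calF N \<alpha>)"
  by (simp add: calF_eq_of_fps)

lemma bounded_below_calFinv [simp]: "bounded_below (calFinv N \<alpha>)"
  by (simp add: calFinv_eq_of_fps)

lemma calF_calFinv: "lmul N (calF N \<alpha>) (calFinv N \<alpha>) = lid N"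
  by (simp add: calF_eq_of_fps calFinv_eq_of_fps of_fps_mult geometric_fps_inverse of_fps_one)

lemma calFinv_calF: "lmul N (calFinv N \<alpha>) (calF N \<alpha>) = lid N"
  by (simp add: calF_eq_of_fps calFinv_eq_of_fps of_fps_mult geometric_fps_inverse' of_fps_one)

lemma calFinv_calF_cancel_left: "Z \<in> ghat N \<Longrightarrow> lmul N (calFinv N \<alpha>) (lmul N (calF N \<alpha>) Z) = Z"
  by (simp add: lmul_assoc[symmetric] calFinv_calF lmul_lid_left)

lemma calF_calFinv_cancel_left: "Z \<in> ghat N \<Longrightarrow> lmul N (calF N \<alpha>) (lmul N (calFinv N \<alpha>) Z) = Z"
  by (simp add: lmul_assoc[symmetric] calF_calFinv lmul_lid_left)

lemma calFinv_calF_cancel_right: "Z \<in> ghat N \<Longrightarrow> lmul N (lmul N Z (calFinv N \<alpha>)) (calF N \<alpha>) = Z"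
  by (simp add: lmul_assoc calFinv_calF lmul_lid_right)

section \<open>The Hamiltonian vector field\<close>

text \<open>Obtained from \<open>{H, f}\<^sub>1\<close> by moving everything except \<open>\<nabla>f\<close> into the second argument of
  the pairing, using its cyclicity and the adjoint of \<^const>\<open>Rop\<close>; \<open>A\<close> stands for \<open>\<nabla>H(L)\<close>.\<close>

definition ham_field :: "nat \<Rightarrow> real \<Rightarrow> lser \<Rightarrow> lser \<Rightarrow> lser" where
  "ham_field N \<alpha> L A = lscale (1/2) (ladd
      (lsub (lmul N L (lmul N (Rop A) (calF N \<alpha>))) (lmul N (lmul N (calF N \<alpha>) (Rop A)) L))
      (Rop_adj (lsub (lmul N L (lmul N A (calF N \<alpha>))) (lmul N (lmul N (calF N \<alpha>) A) L))))"

lemma ghat_ham_field [simp]: "L \<in> ghat N \<Longrightarrow> A \<in> ghat N \<Longrightarrow> ham_field N \<alpha> L A \<in> ghat N"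
  by (simp add: ham_field_def)

lemma pair_rotate3:
  "bounded_below X \<Longrightarrow> bounded_below Y \<Longrightarrow> bounded_below Z \<Longrightarrow> bounded_below L \<Longrightarrow>
    pair N (lmul N X (lmul N Y Z)) L = pair N Z (lmul N L (lmul N X Y))"
proof -
  assume bb: "bounded_below X" "bounded_below Y" "bounded_below Z" "bounded_below L"
  then have "pair N (lmul N X (lmul N Y Z)) L = pair N L (lmul N (lmul N X Y) Z)"
    by (simp add: lmul_assoc pair_commute)
  also have "\<dots> = pair N Z (lmul N L (lmul N X Y))"
    using bb by (simp add: pair_cyclic)
  finally show ?thesis .
qed

lemma pair_brF_eq_pair_ham_field:
  assumes L: "L \<in> ghat N" and A: "A \<in> ghat N" and B: "B \<in> ghat N"
  shows "(1/2) * pair N (ladd (brF N \<alpha> (Rop A) B) (brF N \<alpha> A (Rop B))) L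
    = pair N B (ham_field N \<alpha> L A)"
proof -
  let ?F = "calF N \<alpha>"
  have bb: "bounded_below L" "bounded_below A" "bounded_below B" "bounded_below (Rop A)"
    "bounded_below (Rop B)"
    using L A B by auto
  have "pair N (ladd (brF N \<alpha> (Rop A) B) (brF N \<alpha> A (Rop B))) L
     = (pair N (lmul N (Rop A) (lmul N ?F B)) L - pair N (lmul N B (lmul N ?F (Rop A))) L)
     + (pair N (lmul N A (lmul N ?F (Rop B))) L - pair N (lmul N (Rop B) (lmul N ?F A)) L)"
    using bb by (simp add: brF_def pair_ladd_left pair_lsub_left)
  also have "\<dots> = (pair N B (lmul N L (lmul N (Rop A) ?F)) - pair N B (lmul N (lmul N ?F (Rop A)) L))
     + (pair N (Rop B) (lmul N L (lmul N A ?F)) - pair N (Rop B) (lmul N (lmul N ?F A) L))"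
    using bb by (simp add: pair_rotate3 pair_lmul_assoc)
  also have "\<dots> = pair N B (ladd
      (lsub (lmul N L (lmul N (Rop A) ?F)) (lmul N (lmul N ?F (Rop A)) L))
      (Rop_adj (lsub (lmul N L (lmul N A ?F)) (lmul N (lmul N ?F A) L))))"
    using bb by (simp add: pair_lsub_right pair_ladd_right pair_Rop_left Rop_adj_lsub)
  finally show ?thesis
    using bb by (simp add: ham_field_def pair_lscale_right)
qed

lemma ham_vf_ham_field:
  assumes H: "smooth_fn N H" and L: "L \<in> ghat N"
  shows "ham_vf N \<alpha> H L (ham_field N \<alpha> L (grad N H L))"
  unfolding ham_vf_def PB1_def
proof (intro conjI allI impI)
  show "ham_field N \<alpha> L (grad N H L) \<in> ghat N" using assms by simp
  fix f assume "smooth_fn N f"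
  with assms show "1/2 * pair N (ladd (brF N \<alpha> (Rop (grad N H L)) (grad N f L))
      (brF N \<alpha> (grad N H L) (Rop (grad N f L)))) L
    = pair N (grad N f L) (ham_field N \<alpha> L (grad N H L))"
    by (intro pair_brF_eq_pair_ham_field) auto
qed

lemma ham_field_coeff:
  fixes \<alpha> :: real
  assumes L: "L \<in> ghat N" and A: "A \<in> ghat N"
  defines "ad \<equiv> \<lambda>X. lsub (lmul N L (lmul N X (calF N \<alpha>))) (lmul N (lmul N (calF N \<alpha>) X) L)"
  shows "ham_field N \<alpha> L A p j k
    = (if p \<le> 0 then ad (pi_plus A) p j k else - ad (pi_minus A) p j k)"
proof -
  let ?P = "pi_plus A" and ?M = "pi_minus A"
  have bb: "bounded_below L" "bounded_below ?P" "bounded_below ?M"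
    using L A by auto
  have "ad A = ad (ladd ?P ?M)"
    by (rule arg_cong[of _ _ ad]) (auto simp: fun_eq_iff)
  also have "\<dots> = ladd (ad ?P) (ad ?M)"
    unfolding ad_def using bb
    by (simp add: lmul_ladd_left lmul_ladd_right) (auto simp: fun_eq_iff)
  finally have ad_A: "ad A = ladd (ad ?P) (ad ?M)" .
  have "ad (Rop A) = ad (lsub ?P ?M)"
    by (rule arg_cong[of _ _ ad]) (auto simp: fun_eq_iff)
  also have "\<dots> = lsub (ad ?P) (ad ?M)"
    unfolding ad_def using bb
    by (simp add: lmul_lsub_left lmul_lsub_right) (auto simp: fun_eq_iff)
  finally have ad_RA: "ad (Rop A) = lsub (ad ?P) (ad ?M)" .
  have "ham_field N \<alpha> L A = lscale (1/2) (ladd (ad (Rop A)) (Rop_adj (ad A)))"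
    by (simp add: ham_field_def ad_def)
  then show ?thesis
    by (simp add: ad_A ad_RA Rop_adj_def field_simps)
qed

section \<open>The submanifold \<open>T\<^sub>m\<^sub>+\<^sub>1\<close>\<close>

lemma ghat_nonzero_coeff_index:
  assumes "V \<in> ghat N" "V p j k \<noteq> 0"
  shows "j < N" "k < N" "int k = (int j - p) mod int N"
proof -
  show jk: "j < N" "k < N"
    using assms unfolding ghat_iff supported_in_def by (meson not_le)+
  have "(int j - int k) mod int N = p mod int N"
    using assms unfolding ghat_iff twisted_def by blast
  then have "(int k - int j) mod int N = (- p) mod int N"
    by (rule mod_diff_commute_neg)
  then show "int k = (int j - p) mod int N"
    using mod_diff_solve[of "int k" "int N" "int j" "- p"] jk by simp
qed

lemma in_TdirI:
  assumes V: "V \<in> ghat N" and "vanishes_above V 0" and "vanishes_below V (- int m)"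
  shows "V \<in> Tdir N m"
proof -
  define b where "b = (\<lambda>j. V 0 j j)"
  define a where "a = (\<lambda>i j. V (- int i) j ((j + i) mod N))"
  have "V = Tvar N m b a"
  proof (intro ext)
    fix p j k
    consider "p < - int m \<or> 0 < p" | "p = 0" | "- int m \<le> p" "p < 0"
      by linarith
    then show "V p j k = Tvar N m b a p j k"
    proof cases
      case 1
      then show ?thesis
        using assms(2,3) by (auto simp: Tvar_def vanishes_above_def vanishes_below_def)
    next
      case 2
      have "V p j k \<noteq> 0 \<Longrightarrow> j < N \<and> k = j"
        using ghat_nonzero_coeff_index[OF V, of p j k] 2 by auto
      with 2 show ?thesis
        by (cases "V p j k = 0") (auto simp: Tvar_def b_def)
    next
      case 3
      then have "(int j - p) mod int N = int ((j + nat (- p)) mod N)"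
        by (simp add: zmod_int)
      then have "V p j k \<noteq> 0 \<Longrightarrow> j < N \<and> k < N \<and> k = (j + nat (- p)) mod N"
        using ghat_nonzero_coeff_index[OF V, of p j k] by simp
      with 3 show ?thesis
        by (cases "V p j k = 0") (auto simp: Tvar_def a_def)
    qed
  qed
  then show ?thesis unfolding Tdir_def by blast
qed

lemma ghat_Tvar [simp]: "Tvar N m b a \<in> ghat N"
  unfolding ghat_iff
proof (intro conjI)
  show "supported_in N (Tvar N m b a)"
    unfolding supported_in_def Tvar_def by auto
  show "bounded_below (Tvar N m b a)"
    unfolding bounded_below_def vanishes_below_def Tvar_def by (rule exI[of _ "- int m"]) auto
  show "twisted N (Tvar N m b a)"
    unfolding twisted_def
  proof (intro allI impI)
    fix p j k assume nz: "Tvar N m b a p j k \<noteq> 0"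
    show "(int j - int k) mod int N = p mod int N"
    proof (cases "p = 0")
      case True
      with nz have "j = k" by (simp add: Tvar_def split: if_splits)
      with True show ?thesis by simp
    next
      case False
      with nz have "p \<le> -1" "k = (j + nat (- p)) mod N"
        by (simp_all add: Tvar_def split: if_splits)
      then have "(int k - int j) mod int N = (- p) mod int N"
        by (simp add: zmod_int mod_diff_left_eq)
      from mod_diff_commute_neg[OF this] show ?thesis by simp
    qed
  qed
qed

lemma ghat_calE [simp]: "calE N \<in> ghat N"
  by (simp add: of_fps_X[symmetric])

lemma Tset_ghat [simp]: "L \<in> Tset N m \<Longrightarrow> L \<in> ghat N"
  unfolding Tset_def by auto

lemma vanishes_below_Tset: "L \<in> Tset N m \<Longrightarrow> vanishes_below L (- int m)"
  unfolding Tset_def vanishes_below_def by (auto simp: Tvar_def calE_def)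

lemma vanishes_above_Tset: "L \<in> Tset N m \<Longrightarrow> vanishes_above L 1"
  unfolding Tset_def vanishes_above_def by (auto simp: Tvar_def calE_def)

lemma Tset_top_coeff: "L \<in> Tset N m \<Longrightarrow> L 1 = calE N 1"
  unfolding Tset_def by (auto simp: Tvar_def calE_def fun_eq_iff)

lemma vanishes_below_calF: "vanishes_below (calF N \<alpha>) 0"
  unfolding vanishes_below_def calF_def by (auto simp: lid_def calE_def)

lemma vanishes_above_calF: "vanishes_above (calF N \<alpha>) 1"
  unfolding vanishes_above_def calF_def by (auto simp: lid_def calE_def)

lemma calF_top_coeff: "calF N \<alpha> 1 j k = - complex_of_real \<alpha> * calE N 1 j k"
  unfolding calF_def by (auto simp: lid_def calE_def)

text \<open>Both products have top coefficient \<open>-\<alpha> E\<^sub>1 B\<^sub>-\<^sub>1 E\<^sub>1\<close>, since \<open>L\<^sub>1 = E\<^sub>1\<close> and \<open>\<F>\<^sub>1 = -\<alpha> E\<^sub>1\<close>.\<close>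

lemma Tset_calF_top_coeff_commute:
  assumes L: "L \<in> Tset N m" and B: "vanishes_above B (-1)"
  shows "lmul N L (lmul N B (calF N \<alpha>)) 1 j k = lmul N (lmul N (calF N \<alpha>) B) L 1 j k"
proof -
  let ?e = "calE N 1" and ?c = "B (-1)" and ?a = "complex_of_real \<alpha>"
  have BF: "lmul N B (calF N \<alpha>) 0 l k = (\<Sum>l'<N. ?c l l' * (- ?a * ?e l' k))" for l k
    using lmul_top_coeff[OF B vanishes_above_calF] by (simp add: calF_top_coeff)
  have FB: "lmul N (calF N \<alpha>) B 0 j l = (\<Sum>l'<N. (- ?a * ?e j l') * ?c l' l)" for j l
    using lmul_top_coeff[OF vanishes_above_calF B] by (simp add: calF_top_coeff)
  have "lmul N L (lmul N B (calF N \<alpha>)) 1 j k = (\<Sum>l<N. \<Sum>l'<N. - ?a * (?e j l * ?c l l' * ?e l' k))"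
    using lmul_top_coeff[OF vanishes_above_Tset[OF L] vanishes_above_lmul[OF B vanishes_above_calF]]
    by (simp add: Tset_top_coeff[OF L] BF sum_distrib_left algebra_simps)
  also have "\<dots> = (\<Sum>l<N. \<Sum>l'<N. - ?a * (?e j l' * ?c l' l * ?e l k))"
    by (rule sum.swap)
  also have "\<dots> = lmul N (lmul N (calF N \<alpha>) B) L 1 j k"
    using lmul_top_coeff[OF vanishes_above_lmul[OF vanishes_above_calF B] vanishes_above_Tset[OF L]]
    by (simp add: Tset_top_coeff[OF L] FB sum_distrib_left sum_distrib_right algebra_simps)
  finally show ?thesis .
qed

lemma ham_field_in_Tdir:
  assumes L: "L \<in> Tset N m" and A: "A \<in> ghat N"
  shows "ham_field N \<alpha> L A \<in> Tdir N m"
proof (rule in_TdirI)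
  let ?F = "calF N \<alpha>"
  have LG: "L \<in> ghat N" using L by simp
  show "ham_field N \<alpha> L A \<in> ghat N" using LG A by simp
  have plus: "vanishes_below (pi_plus A) 0" and minus: "vanishes_above (pi_minus A) (-1)"
    by (simp_all add: vanishes_below_def vanishes_above_def)
  have "vanishes_below (lmul N L (lmul N (pi_plus A) ?F)) (- int m + (0 + 0))"
    and "vanishes_below (lmul N (lmul N ?F (pi_plus A)) L) ((0 + 0) + - int m)"
    by (intro vanishes_below_lmul vanishes_below_Tset[OF L] plus vanishes_below_calF)+
  then show "vanishes_below (ham_field N \<alpha> L A) (- int m)"
    unfolding vanishes_below_def by (auto simp: ham_field_coeff[OF LG A])
  have top: "lmul N L (lmul N (pi_minus A) ?F) 1 j k = lmul N (lmul N ?F (pi_minus A)) L 1 j k"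
    for j k
    by (rule Tset_calF_top_coeff_commute[OF L minus])
  have "vanishes_above (lmul N L (lmul N (pi_minus A) ?F)) (1 + (-1 + 1))"
    and "vanishes_above (lmul N (lmul N ?F (pi_minus A)) L) ((1 + -1) + 1)"
    by (intro vanishes_above_lmul vanishes_above_Tset[OF L] minus vanishes_above_calF)+
  then have above: "vanishes_above (lmul N L (lmul N (pi_minus A) ?F)) 1"
    "vanishes_above (lmul N (lmul N ?F (pi_minus A)) L) 1"
    by simp_all
  show "vanishes_above (ham_field N \<alpha> L A) 0"
    unfolding vanishes_above_def
  proof (intro allI impI)
    fix p :: int and j k assume "0 < p"
    then consider "p = 1" | "1 < p" by linarith
    then show "ham_field N \<alpha> L A p j k = 0"
      using top above by cases (auto simp: ham_field_coeff[OF LG A] vanishes_above_def)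
  qed
qed

theorem Tset_poisson_submanifold: "poisson_submanifold N \<alpha> (Tset N m) (Tdir N m)"
  unfolding poisson_submanifold_def
proof (intro allI impI ballI)
  fix H L assume H: "smooth_fn N H" and L: "L \<in> Tset N m"
  then have "L \<in> ghat N" by simp
  with H L show "\<exists>V\<in>Tdir N m. ham_vf N \<alpha> H L V"
    using ham_vf_ham_field ham_field_in_Tdir grad_in_ghat by blast
qed

definition has_coeff_deriv :: "(complex \<Rightarrow> lser) \<Rightarrow> lser \<Rightarrow> complex \<Rightarrow> bool" where
  "has_coeff_deriv \<gamma> \<gamma>' s \<longleftrightarrow> (\<forall>p j k. ((\<lambda>t. \<gamma> t p j k) has_field_derivative \<gamma>' p j k) (at s))"

definition uniformly_vanishes_below :: "(complex \<Rightarrow> lser) \<Rightarrow> int \<Rightarrow> bool" where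
  "uniformly_vanishes_below \<gamma> d \<longleftrightarrow> (\<forall>t. vanishes_below (\<gamma> t) d)"

lemma has_coeff_deriv_vanishes_below:
  assumes "uniformly_vanishes_below \<gamma> d" "has_coeff_deriv \<gamma> \<gamma>' s"
  shows "vanishes_below \<gamma>' d"
  unfolding vanishes_below_def
proof (intro allI impI)
  fix p j k assume "p < d"
  then have "((\<lambda>t. \<gamma> t p j k) has_field_derivative 0) (at s)"
    using assms(1) by (simp add: uniformly_vanishes_below_def vanishes_below_def)
  with assms(2) show "\<gamma>' p j k = 0"
    unfolding has_coeff_deriv_def by (meson DERIV_unique)
qed

lemma has_coeff_deriv_lmul:
  assumes X: "uniformly_vanishes_below X a" and Y: "uniformly_vanishes_below Y b"
    and dX: "has_coeff_deriv X X' s" and dY: "has_coeff_deriv Y Y' s"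
  shows "has_coeff_deriv (\<lambda>t. lmul N (X t) (Y t)) (ladd (lmul N X' (Y s)) (lmul N (X s) Y')) s"
  unfolding has_coeff_deriv_def
proof (intro allI)
  fix p j k
  have Xt: "vanishes_below (X t) a" and Yt: "vanishes_below (Y t) b" for t
    using X Y unfolding uniformly_vanishes_below_def by blast+
  have X': "vanishes_below X' a" and Y': "vanishes_below Y' b"
    using has_coeff_deriv_vanishes_below X Y dX dY by blast+
  have "((\<lambda>t. \<Sum>q\<in>{a..p-b}. \<Sum>l<N. X t q j l * Y t (p - q) l k) has_field_derivative
      (\<Sum>q\<in>{a..p-b}. \<Sum>l<N. X' q j l * Y s (p - q) l k + Y' (p - q) l k * X s q j l)) (at s)"
    using dX dY unfolding has_coeff_deriv_def by (intro DERIV_sum DERIV_mult) auto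
  then show "((\<lambda>t. lmul N (X t) (Y t) p j k) has_field_derivative
      ladd (lmul N X' (Y s)) (lmul N (X s) Y') p j k) (at s)"
    by (simp add: lmul_window[OF Xt Yt] lmul_window[OF X' Yt] lmul_window[OF Xt Y']
        sum.distrib mult.commute)
qed

lemma uniformly_vanishes_below_lmul:
  "uniformly_vanishes_below X a \<Longrightarrow> uniformly_vanishes_below Y b \<Longrightarrow>
    uniformly_vanishes_below (\<lambda>t. lmul N (X t) (Y t)) (a + b)"
  unfolding uniformly_vanishes_below_def by (simp add: vanishes_below_lmul)

lemma uniformly_vanishes_below_const: "vanishes_below X d \<Longrightarrow> uniformly_vanishes_below (\<lambda>t. X) d"
  unfolding uniformly_vanishes_below_def by simp

lemma has_coeff_deriv_const: "has_coeff_deriv (\<lambda>t. X) (\<lambda>p j k. 0) s"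
  unfolding has_coeff_deriv_def by simp

lemma lmul_zero_left [simp]: "lmul N (\<lambda>p j k. 0) X = (\<lambda>p j k. 0)"
  by (simp add: lmul_def fun_eq_iff)

lemma lmul_zero_right [simp]: "lmul N X (\<lambda>p j k. 0) = (\<lambda>p j k. 0)"
  by (simp add: lmul_def fun_eq_iff)

lemma ladd_zero_left [simp]: "ladd (\<lambda>p j k. 0) X = X"
  by (simp add: ladd_def)

lemma ladd_zero_right [simp]: "ladd X (\<lambda>p j k. 0) = X"
  by (simp add: ladd_def)

lemma cderiv_eqI: "has_coeff_deriv \<gamma> \<gamma>' s \<Longrightarrow> cderiv \<gamma> s = \<gamma>'"
  unfolding has_coeff_deriv_def cderiv_def by (auto intro!: ext DERIV_imp_deriv)

lemma adm_curveI:
  assumes "\<And>s. \<gamma> s \<in> ghat N" "uniformly_vanishes_below \<gamma> d" "\<And>s. has_coeff_deriv \<gamma> (\<gamma>' s) s"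
  shows "adm_curve N \<gamma>"
  unfolding adm_curve_def
proof (intro conjI allI)
  show "\<exists>d. \<forall>s p j k. p < d \<longrightarrow> \<gamma> s p j k = 0"
    using assms(2) unfolding uniformly_vanishes_below_def vanishes_below_def by blast
  fix p j k s
  show "(\<lambda>t. \<gamma> t p j k) field_differentiable at s"
    using assms(3)[of s] unfolding has_coeff_deriv_def field_differentiable_def by blast
qed (use assms(1) in blast)

lemma adm_curve_has_coeff_deriv: "adm_curve N \<gamma> \<Longrightarrow> has_coeff_deriv \<gamma> (cderiv \<gamma> s) s"
  unfolding adm_curve_def has_coeff_deriv_def cderiv_def
  by (auto intro: field_differentiable_derivI)

lemma adm_curve_uniformly_vanishes_below:
  "adm_curve N \<gamma> \<Longrightarrow> \<exists>d. uniformly_vanishes_below \<gamma> d"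
  unfolding adm_curve_def uniformly_vanishes_below_def vanishes_below_def by blast

lemma smooth_fn_chain:
  "smooth_fn N \<phi> \<Longrightarrow> adm_curve N \<gamma> \<Longrightarrow>
    ((\<lambda>t. \<phi> (\<gamma> t)) has_field_derivative pair N (grad N \<phi> (\<gamma> s)) (cderiv \<gamma> s)) (at s)"
  unfolding smooth_fn_def by blast

lemma has_coeff_deriv_of_fps:
  assumes "\<And>n. ((\<lambda>t. fps_nth (f t) n) has_field_derivative fps_nth f' n) (at s)"
  shows "has_coeff_deriv (\<lambda>t. of_fps N (f t)) (of_fps N f') s"
  unfolding has_coeff_deriv_def of_fps_def
  using assms by (auto intro!: DERIV_cmult_right)

lemma uniformly_vanishes_below_of_fps: "uniformly_vanishes_below (\<lambda>t. of_fps N (f t)) 0"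
  unfolding uniformly_vanishes_below_def by (simp add: vanishes_below_of_fps)

section \<open>Ad-invariant functions\<close>

lemma ad_inv_smooth_fn: "ad_inv N \<phi> \<Longrightarrow> smooth_fn N \<phi>"
  by (simp add: ad_inv_def)

lemma ad_inv_grad_commute:
  "ad_inv N \<phi> \<Longrightarrow> L \<in> ghat N \<Longrightarrow> lmul N (grad N \<phi> L) L = lmul N L (grad N \<phi> L)"
  by (simp add: ad_inv_def)

text \<open>Along a Lax curve \<open>\<gamma>' = [K, \<gamma>]\<close> the derivative of \<open>\<phi> \<circ> \<gamma>\<close> is
  \<open>\<langle>\<nabla>\<phi>, [K, \<gamma>]\<rangle> = \<langle>[\<gamma>, \<nabla>\<phi>], K\<rangle> = 0\<close>.\<close>

lemma ad_inv_const_along_lax_curve: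
  assumes \<phi>: "ad_inv N \<phi>" and \<gamma>: "adm_curve N \<gamma>" and K: "\<And>s. K s \<in> ghat N"
    and lax: "\<And>s. cderiv \<gamma> s = lsub (lmul N (K s) (\<gamma> s)) (lmul N (\<gamma> s) (K s))"
  shows "\<phi> (\<gamma> t) = \<phi> (\<gamma> 0)"
proof -
  have "((\<lambda>t. \<phi> (\<gamma> t)) has_field_derivative 0) (at s)" for s
  proof -
    let ?g = "grad N \<phi> (\<gamma> s)"
    have \<gamma>s: "\<gamma> s \<in> ghat N" using \<gamma> by (simp add: adm_curve_def)
    then have "?g \<in> ghat N" using \<phi> by (simp add: ad_inv_smooth_fn)
    then have bb: "bounded_below ?g" "bounded_below (\<gamma> s)" "bounded_below (K s)"
      using \<gamma>s K[of s] by (blast intro: ghat_bounded_below)+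
    have "pair N ?g (cderiv \<gamma> s)
        = pair N (lmul N (\<gamma> s) ?g) (K s) - pair N (lmul N ?g (\<gamma> s)) (K s)"
      using bb by (simp add: lax pair_lsub_right pair_cyclic pair_commute[of _ "K s"] pair_lmul_assoc)
    also have "\<dots> = 0"
      by (simp add: ad_inv_grad_commute[OF \<phi> \<gamma>s])
    finally show ?thesis
      using smooth_fn_chain[OF ad_inv_smooth_fn[OF \<phi>] \<gamma>, of s] by simp
  qed
  then show ?thesis
    using has_field_derivative_zero_constant[of UNIV "\<lambda>t. \<phi> (\<gamma> t)"] by force
qed

lemma geometric_fps_square_nth: "fps_nth (geometric_fps c * geometric_fps c) n = of_nat (Suc n) * c ^ n"
proof -
  have "fps_nth (geometric_fps c * geometric_fps c) n = (\<Sum>i=0..n. c ^ n)"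
    unfolding fps_mult_nth by (rule sum.cong) (auto simp: power_add[symmetric])
  then show ?thesis by simp
qed

lemma geometric_fps_has_coeff_deriv:
  "((\<lambda>t. fps_nth (geometric_fps (t * a)) n) has_field_derivative
     fps_nth (fps_const a * fps_X * geometric_fps (s * a) * geometric_fps (s * a)) n) (at s)"
proof -
  have "((\<lambda>t. (t * a) ^ n) has_field_derivative of_nat n * (s * a) ^ (n - 1) * a) (at s)"
    by (auto intro!: derivative_eq_intros)
  moreover have "fps_const a * fps_X * geometric_fps (s * a) * geometric_fps (s * a)
      = fps_X * (fps_const a * (geometric_fps (s * a) * geometric_fps (s * a)))"
    by (simp add: ac_simps)
  ultimately show ?thesis
    by (cases n) (simp_all add: fps_X_mult_nth geometric_fps_square_nth ac_simps)
qed

lemma calF_line_has_coeff_deriv: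
  "((\<lambda>t. fps_nth (1 - fps_const (t * a) * fps_X) n) has_field_derivative
     fps_nth (- (fps_const a * fps_X)) n) (at s)"
  by (cases "n = 1") (auto intro!: derivative_eq_intros)

lemma conj_curve_has_coeff_deriv:
  fixes a :: complex and N :: nat
  defines "G \<equiv> \<lambda>t. of_fps N (geometric_fps (t * a))"
    and "F \<equiv> \<lambda>t. of_fps N (1 - fps_const (t * a) * fps_X)"
  assumes L: "L \<in> ghat N"
  shows "adm_curve N (\<lambda>t. lmul N (G t) (lmul N L (F t)))"
    and "has_coeff_deriv (\<lambda>t. lmul N (G t) (lmul N L (F t))) (ladd
      (lmul N (of_fps N (fps_const a * fps_X * geometric_fps (s * a) * geometric_fps (s * a)))
        (lmul N L (F s)))
      (lmul N (G s) (lmul N L (lscale (-1) (of_fps N (fps_const a * fps_X)))))) s"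
proof -
  let ?G' = "\<lambda>s. of_fps N (fps_const a * fps_X * geometric_fps (s * a) * geometric_fps (s * a))"
  obtain d where d: "vanishes_below L d"
    using L by (meson ghat_bounded_below bounded_belowE)
  have uL: "uniformly_vanishes_below (\<lambda>t. L) d"
    by (rule uniformly_vanishes_below_const[OF d])
  have uG: "uniformly_vanishes_below G 0" and uF: "uniformly_vanishes_below F 0"
    unfolding G_def F_def by (rule uniformly_vanishes_below_of_fps)+
  have dG: "has_coeff_deriv G (?G' s) s" for s
    unfolding G_def by (rule has_coeff_deriv_of_fps[OF geometric_fps_has_coeff_deriv])
  have dF: "has_coeff_deriv F (lscale (-1) (of_fps N (fps_const a * fps_X))) s" for s
    unfolding F_def of_fps_uminus[symmetric]
    by (rule has_coeff_deriv_of_fps[OF calF_line_has_coeff_deriv])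
  show d\<gamma>: "has_coeff_deriv (\<lambda>t. lmul N (G t) (lmul N L (F t))) (ladd
      (lmul N (?G' s) (lmul N L (F s)))
      (lmul N (G s) (lmul N L (lscale (-1) (of_fps N (fps_const a * fps_X)))))) s" for s
    using has_coeff_deriv_lmul[OF uG uniformly_vanishes_below_lmul[OF uL uF] dG
        has_coeff_deriv_lmul[OF uL uF has_coeff_deriv_const dF]]
    by simp
  show "adm_curve N (\<lambda>t. lmul N (G t) (lmul N L (F t)))"
    by (rule adm_curveI[OF _ uniformly_vanishes_below_lmul[OF uG uniformly_vanishes_below_lmul[OF uL uF]] d\<gamma>])
      (simp add: G_def F_def L)
qed

text \<open>The curve \<open>\<gamma>(t) = (I - t\<alpha>\<E>)\<^sup>-\<^sup>1 L (I - t\<alpha>\<E>)\<close> joins \<open>L\<close> to \<open>\<F>\<^sup>-\<^sup>1 L \<F>\<close> and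
  satisfies \<open>\<gamma>' = [K, \<gamma>]\<close> with \<open>K(t) = \<alpha>\<E> (I - t\<alpha>\<E>)\<^sup>-\<^sup>1\<close>.\<close>

lemma conj_curve_lax:
  fixes a :: complex and N :: nat
  defines "G \<equiv> \<lambda>t. of_fps N (geometric_fps (t * a))"
    and "F \<equiv> \<lambda>t. of_fps N (1 - fps_const (t * a) * fps_X)"
    and "K \<equiv> \<lambda>t. of_fps N (fps_const a * fps_X * geometric_fps (t * a))"
  assumes L: "L \<in> ghat N"
  shows "cderiv (\<lambda>t. lmul N (G t) (lmul N L (F t))) s
      = lsub (lmul N (K s) (lmul N (G s) (lmul N L (F s))))
             (lmul N (lmul N (G s) (lmul N L (F s))) (K s))"
proof -
  let ?\<gamma> = "\<lambda>t. lmul N (G t) (lmul N L (F t))"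
  let ?Y = "of_fps N (fps_const a * fps_X)"
  have bb: "bounded_below (G s)" "bounded_below (F s)" "bounded_below (K s)" "bounded_below L"
    using L by (auto simp: G_def F_def K_def)
  have "lmul N (K s) (?\<gamma> s) = lmul N (lmul N (K s) (G s)) (lmul N L (F s))"
    using bb by (simp add: lmul_assoc)
  also have "lmul N (K s) (G s)
      = of_fps N (fps_const a * fps_X * geometric_fps (s * a) * geometric_fps (s * a))"
    by (simp add: K_def G_def of_fps_mult)
  finally have K\<gamma>: "lmul N (K s) (?\<gamma> s)
      = lmul N (of_fps N (fps_const a * fps_X * geometric_fps (s * a) * geometric_fps (s * a)))
          (lmul N L (F s))" .
  have "lmul N (?\<gamma> s) (K s) = lmul N (G s) (lmul N L (lmul N (F s) (K s)))"
    using bb by (simp add: lmul_assoc)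
  also have "(1 - fps_const (s * a) * fps_X) * (fps_const a * fps_X * geometric_fps (s * a))
      = fps_const a * fps_X"
    by (simp only: mult.left_commute[of "1 - _"] geometric_fps_inverse mult_1_right)
  then have "lmul N (F s) (K s) = ?Y"
    unfolding F_def K_def of_fps_mult by (rule arg_cong)
  finally have \<gamma>K: "lmul N (?\<gamma> s) (K s) = lmul N (G s) (lmul N L ?Y)" .
  have "cderiv ?\<gamma> s = ladd
      (lmul N (of_fps N (fps_const a * fps_X * geometric_fps (s * a) * geometric_fps (s * a)))
        (lmul N L (F s)))
      (lmul N (G s) (lmul N L (lscale (-1) ?Y)))"
    unfolding G_def F_def by (rule cderiv_eqI[OF conj_curve_has_coeff_deriv(2)[OF L]])
  then show ?thesis
    unfolding K\<gamma> \<gamma>K using bb by (simp add: lmul_lscale_right) (auto simp: fun_eq_iff)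
qed
lemma ad_inv_conj_calF:
  assumes \<phi>: "ad_inv N \<phi>" and L: "L \<in> ghat N"
  shows "\<phi> (lmul N (calFinv N \<alpha>) (lmul N L (calF N \<alpha>))) = \<phi> L"
proof -
  let ?a = "complex_of_real \<alpha>"
  let ?\<gamma> = "\<lambda>t. lmul N (of_fps N (geometric_fps (t * ?a)))
      (lmul N L (of_fps N (1 - fps_const (t * ?a) * fps_X)))"
  have "\<phi> (?\<gamma> 1) = \<phi> (?\<gamma> 0)"
    by (rule ad_inv_const_along_lax_curve[OF \<phi> conj_curve_has_coeff_deriv(1)[OF L] _
        conj_curve_lax[OF L]])
      simp
  moreover have "?\<gamma> 1 = lmul N (calFinv N \<alpha>) (lmul N L (calF N \<alpha>))"
    by (simp add: calFinv_eq_of_fps calF_eq_of_fps)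
  moreover have "?\<gamma> 0 = L"
    using L by (simp add: geometric_fps_zero of_fps_one lmul_lid_left lmul_lid_right supported_in_lmul)
  ultimately show ?thesis by simp
qed

lemma grad_conj_calF:
  assumes \<phi>: "ad_inv N \<phi>" and L: "L \<in> ghat N"
  shows "grad N \<phi> (lmul N (calFinv N \<alpha>) (lmul N L (calF N \<alpha>)))
       = lmul N (calFinv N \<alpha>) (lmul N (grad N \<phi> L) (calF N \<alpha>))"
proof (rule grad_eqI)
  let ?F = "calF N \<alpha>" and ?Fi = "calFinv N \<alpha>" and ?X = "grad N \<phi> L"
  have X: "?X \<in> ghat N" using \<phi> L by (simp add: ad_inv_smooth_fn)
  show "has_grad N \<phi> (lmul N ?Fi (lmul N L ?F)) (lmul N ?Fi (lmul N ?X ?F))"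
    unfolding has_grad_def
  proof (intro conjI ballI)
    show "lmul N ?Fi (lmul N ?X ?F) \<in> ghat N" using X by simp
    fix M assume M: "M \<in> ghat N"
    let ?M' = "lmul N ?F (lmul N M ?Fi)"
    have M': "?M' \<in> ghat N" using M by simp
    have "lmul N ?Fi (lmul N (lscale e ?M') ?F) = lscale e M" for e
      using M by (simp add: lmul_lscale_left lmul_lscale_right lmul_assoc calFinv_calF_cancel_left
          calFinv_calF lmul_lid_right)
    then have line: "ladd (lmul N ?Fi (lmul N L ?F)) (lscale e M)
        = lmul N ?Fi (lmul N (ladd L (lscale e ?M')) ?F)" for e
      using L M by (simp add: lmul_ladd_left lmul_ladd_right)
    have "((\<lambda>e. \<phi> (ladd L (lscale e ?M'))) has_field_derivative pair N ?X ?M') (at 0)"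
      using smooth_fn_has_grad[OF ad_inv_smooth_fn[OF \<phi>] L] M' unfolding has_grad_def by blast
    moreover have "pair N ?X ?M' = pair N (lmul N ?Fi (lmul N ?X ?F)) M"
      using X M by (simp add: pair_lmul_assoc pair_commute[of _ ?Fi] lmul_assoc)
    ultimately show "((\<lambda>e. \<phi> (ladd (lmul N ?Fi (lmul N L ?F)) (lscale e M))) has_field_derivative
        pair N (lmul N ?Fi (lmul N ?X ?F)) M) (at 0)"
      unfolding line using ad_inv_conj_calF[OF \<phi>] L M' by simp
  qed
qed

lemma ad_inv_calFinv_swap:
  assumes \<phi>: "ad_inv N \<phi>" and T: "T \<in> ghat N"
  shows "\<phi> (lmul N T (calFinv N \<alpha>)) = \<phi> (lmul N (calFinv N \<alpha>) T)"
  using ad_inv_conj_calF[OF \<phi>, of "lmul N T (calFinv N \<alpha>)" \<alpha>] T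
  by (simp add: calFinv_calF_cancel_right)

lemma grad_calFinv_swap:
  assumes \<phi>: "ad_inv N \<phi>" and T: "T \<in> ghat N"
  shows "lmul N (grad N \<phi> (lmul N (calFinv N \<alpha>) T)) (calFinv N \<alpha>)
       = lmul N (calFinv N \<alpha>) (grad N \<phi> (lmul N T (calFinv N \<alpha>)))"
proof -
  let ?F = "calF N \<alpha>" and ?Fi = "calFinv N \<alpha>"
  have TF: "lmul N T ?Fi \<in> ghat N" using T by simp
  then have X: "grad N \<phi> (lmul N T ?Fi) \<in> ghat N" using \<phi> by (simp add: ad_inv_smooth_fn)
  have "grad N \<phi> (lmul N ?Fi T) = grad N \<phi> (lmul N ?Fi (lmul N (lmul N T ?Fi) ?F))"
    using T by (simp add: calFinv_calF_cancel_right)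
  also have "\<dots> = lmul N ?Fi (lmul N (grad N \<phi> (lmul N T ?Fi)) ?F)"
    by (rule grad_conj_calF[OF \<phi> TF])
  finally show ?thesis
    using X by (simp add: lmul_assoc calF_calFinv lmul_lid_right)
qed

lemma has_grad_comp_lmul_right:
  assumes \<phi>: "smooth_fn N \<phi>" and R: "R \<in> ghat N" and T: "T \<in> ghat N"
  shows "has_grad N (\<lambda>X. \<phi> (lmul N X R)) T (lmul N R (grad N \<phi> (lmul N T R)))"
  unfolding has_grad_def
proof (intro conjI ballI)
  let ?X = "grad N \<phi> (lmul N T R)"
  have TR: "lmul N T R \<in> ghat N" using T R by simp
  then have X: "?X \<in> ghat N" using \<phi> by simp
  then show "lmul N R ?X \<in> ghat N" using R by simp
  fix M assume M: "M \<in> ghat N"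
  then have MR: "lmul N M R \<in> ghat N" using R by simp
  have line: "lmul N (ladd T (lscale e M)) R = ladd (lmul N T R) (lscale e (lmul N M R))" for e
    using T M R by (simp add: lmul_ladd_left lmul_lscale_left)
  have "((\<lambda>e. \<phi> (ladd (lmul N T R) (lscale e (lmul N M R)))) has_field_derivative
      pair N ?X (lmul N M R)) (at 0)"
    using smooth_fn_has_grad[OF \<phi> TR] MR unfolding has_grad_def by blast
  moreover have "pair N ?X (lmul N M R) = pair N (lmul N R ?X) M"
    using X M R by (simp add: pair_lmul_assoc pair_commute[of _ R])
  ultimately show "((\<lambda>e. \<phi> (lmul N (ladd T (lscale e M)) R)) has_field_derivative
      pair N (lmul N R ?X) M) (at 0)"
    unfolding line by simp
qed

lemma grad_comp_lmul_right:
  "smooth_fn N \<phi> \<Longrightarrow> R \<in> ghat N \<Longrightarrow> T \<in> ghat N \<Longrightarrow>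
    grad N (\<lambda>X. \<phi> (lmul N X R)) T = lmul N R (grad N \<phi> (lmul N T R))"
  by (rule grad_eqI[OF has_grad_comp_lmul_right])

lemma smooth_fn_comp_lmul_right:
  assumes \<phi>: "smooth_fn N \<phi>" and R: "R \<in> ghat N"
  shows "smooth_fn N (\<lambda>X. \<phi> (lmul N X R))"
  unfolding smooth_fn_def
proof (intro conjI ballI allI impI)
  fix T assume "T \<in> ghat N"
  then show "\<exists>G. has_grad N (\<lambda>X. \<phi> (lmul N X R)) T G"
    using has_grad_comp_lmul_right[OF \<phi> R] by blast
next
  fix \<gamma> s assume \<gamma>: "adm_curve N \<gamma>"
  obtain d where u: "uniformly_vanishes_below \<gamma> d"
    using adm_curve_uniformly_vanishes_below[OF \<gamma>] by blast
  obtain r where r: "vanishes_below R r"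
    using R by (meson ghat_bounded_below bounded_belowE)
  have \<gamma>t: "\<gamma> t \<in> ghat N" for t using \<gamma> by (simp add: adm_curve_def)
  have d\<gamma>R: "has_coeff_deriv (\<lambda>t. lmul N (\<gamma> t) R) (lmul N (cderiv \<gamma> t) R) t" for t
    using has_coeff_deriv_lmul[OF u uniformly_vanishes_below_const[OF r]
        adm_curve_has_coeff_deriv[OF \<gamma>] has_coeff_deriv_const, of N t]
    by simp
  have \<gamma>R: "adm_curve N (\<lambda>t. lmul N (\<gamma> t) R)"
    by (rule adm_curveI[OF _ uniformly_vanishes_below_lmul[OF u uniformly_vanishes_below_const[OF r]] d\<gamma>R])
      (simp add: \<gamma>t R)
  have "bounded_below (cderiv \<gamma> s)"
    using has_coeff_deriv_vanishes_below[OF u adm_curve_has_coeff_deriv[OF \<gamma>]]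
    unfolding bounded_below_def by blast
  moreover have "grad N \<phi> (lmul N (\<gamma> s) R) \<in> ghat N"
    using \<phi> \<gamma>t R by simp
  ultimately have "pair N (grad N \<phi> (lmul N (\<gamma> s) R)) (lmul N (cderiv \<gamma> s) R)
      = pair N (lmul N R (grad N \<phi> (lmul N (\<gamma> s) R))) (cderiv \<gamma> s)"
    using R by (simp add: pair_lmul_assoc pair_commute[of _ R])
  then show "((\<lambda>t. \<phi> (lmul N (\<gamma> t) R)) has_field_derivative
      pair N (grad N (\<lambda>X. \<phi> (lmul N X R)) (\<gamma> s)) (cderiv \<gamma> s)) (at s)"
    using smooth_fn_chain[OF \<phi> \<gamma>R, of s]
    by (simp add: cderiv_eqI[OF d\<gamma>R] grad_comp_lmul_right[OF \<phi> R \<gamma>t])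
qed

section \<open>Lax form of the flows\<close>

lemma ham_field_commuting:
  assumes "lmul N L (lmul N A (calF N \<alpha>)) = lmul N (lmul N (calF N \<alpha>) A) L"
  shows "ham_field N \<alpha> L A = lscale (1/2)
    (lsub (lmul N L (lmul N (Rop A) (calF N \<alpha>))) (lmul N (lmul N (calF N \<alpha>) (Rop A)) L))"
  using assms by (simp add: ham_field_def fun_eq_iff Rop_adj_def)

text \<open>This is Ad-invariance of \<open>\<phi>\<close> at \<open>T\<F>\<^sup>-\<^sup>1\<close>, conjugated by \<open>\<F>\<close>.\<close>

lemma ad_inv_calF_commute:
  fixes \<alpha> :: real
  assumes \<phi>: "ad_inv N \<phi>" and T: "T \<in> ghat N"
  defines "A \<equiv> lmul N (calFinv N \<alpha>) (grad N \<phi> (lmul N T (calFinv N \<alpha>)))"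
  shows "lmul N T (lmul N A (calF N \<alpha>)) = lmul N (lmul N (calF N \<alpha>) A) T"
proof -
  let ?F = "calF N \<alpha>" and ?Fi = "calFinv N \<alpha>"
  let ?X = "grad N \<phi> (lmul N T ?Fi)"
  have TF: "lmul N T ?Fi \<in> ghat N" using T by simp
  then have X: "?X \<in> ghat N" using \<phi> by (simp add: ad_inv_smooth_fn)
  have "lmul N T (lmul N A ?F) = lmul N (lmul N (lmul N T ?Fi) ?X) ?F"
    using T X by (simp add: A_def lmul_assoc)
  also have "\<dots> = lmul N (lmul N ?X (lmul N T ?Fi)) ?F"
    by (simp add: ad_inv_grad_commute[OF \<phi> TF])
  also have "\<dots> = lmul N ?X T"
    using T X by (simp add: lmul_assoc calFinv_calF lmul_lid_right)
  also have "\<dots> = lmul N (lmul N ?F A) T"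
    using X by (simp add: A_def calF_calFinv_cancel_left)
  finally show ?thesis .
qed

lemma pair_commuting_sandwich:
  assumes bb: "bounded_below B" "bounded_below T" "bounded_below R" "bounded_below F"
    and comm: "lmul N T (lmul N B F) = lmul N (lmul N F B) T"
  shows "pair N B (lmul N T (lmul N R F)) = pair N B (lmul N (lmul N F R) T)"
proof -
  have "pair N B (lmul N T (lmul N R F)) = pair N (lmul N (lmul N F B) T) R"
    using bb by (metis bounded_below_lmul lmul_assoc pair_commute pair_lmul_assoc)
  also have "\<dots> = pair N (lmul N T (lmul N B F)) R"
    by (simp add: comm)
  also have "\<dots> = pair N B (lmul N (lmul N F R) T)"
    using bb by (metis bounded_below_lmul lmul_assoc pair_commute pair_lmul_assoc)
  finally show ?thesis .
qed

lemma lid_shift_commutator: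
  assumes "supported_in N C" "bounded_below X" "bounded_below C"
  shows "lsub (lmul N (ladd (lid N) (lscale c X)) C) (lmul N C (ladd (lid N) (lscale c X)))
    = lscale c (lsub (lmul N X C) (lmul N C X))"
  using assms
  by (simp add: lmul_ladd_left lmul_ladd_right lmul_lscale_left lmul_lscale_right
      lmul_lid_left lmul_lid_right) (auto simp: fun_eq_iff algebra_simps)

lemma calFinv_commutator:
  assumes T: "T \<in> ghat N" and B: "B \<in> ghat N"
  shows "lmul N (lsub (lmul N T (lmul N B (calF N \<alpha>))) (lmul N (lmul N (calF N \<alpha>) B) T))
        (calFinv N \<alpha>)
      = lsub (lmul N (lmul N T (calFinv N \<alpha>)) (lmul N (calF N \<alpha>) B))
          (lmul N (lmul N (calF N \<alpha>) B) (lmul N T (calFinv N \<alpha>)))"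
    and "lmul N (calFinv N \<alpha>)
        (lsub (lmul N T (lmul N B (calF N \<alpha>))) (lmul N (lmul N (calF N \<alpha>) B) T))
      = lsub (lmul N (lmul N (calFinv N \<alpha>) T) (lmul N B (calF N \<alpha>)))
          (lmul N (lmul N B (calF N \<alpha>)) (lmul N (calFinv N \<alpha>) T))"
  using T B
  by (simp_all add: lmul_lsub_left lmul_lsub_right lmul_assoc calF_calFinv calFinv_calF
      calFinv_calF_cancel_left calF_calFinv_cancel_left lmul_lid_right)

definition lax_C1 :: "nat \<Rightarrow> real \<Rightarrow> (lser \<Rightarrow> complex) \<Rightarrow> lser \<Rightarrow> lser" where
  "lax_C1 N \<alpha> \<phi> T = lscale (1/2)
    (lmul N (calF N \<alpha>) (Rop (lmul N (calFinv N \<alpha>) (grad N \<phi> (lmul N T (calFinv N \<alpha>))))))"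

definition lax_C2 :: "nat \<Rightarrow> real \<Rightarrow> (lser \<Rightarrow> complex) \<Rightarrow> lser \<Rightarrow> lser" where
  "lax_C2 N \<alpha> \<phi> T = lscale (1/2)
    (lmul N (Rop (lmul N (grad N \<phi> (lmul N (calFinv N \<alpha>) T)) (calFinv N \<alpha>))) (calF N \<alpha>))"

definition psi_flow :: "nat \<Rightarrow> real \<Rightarrow> (lser \<Rightarrow> complex) \<Rightarrow> lser \<Rightarrow> lser" where
  "psi_flow N \<alpha> \<phi> T = lsub (lmul N T (lax_C2 N \<alpha> \<phi> T)) (lmul N (lax_C1 N \<alpha> \<phi> T) T)"

text \<open>The witness is \<open>B = R(\<nabla>\<psi>(T))/2\<close>; the last equation uses Ad-invariance of \<open>\<phi>\<close>.\<close>

lemma lax_factorization: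
  assumes \<phi>: "ad_inv N \<phi>" and T: "T \<in> ghat N"
  obtains B where "B \<in> ghat N"
    and "lax_C1 N \<alpha> \<phi> T = lmul N (calF N \<alpha>) B" and "lax_C2 N \<alpha> \<phi> T = lmul N B (calF N \<alpha>)"
    and "ham_field N \<alpha> T (grad N (\<lambda>X. \<phi> (lmul N X (calFinv N \<alpha>))) T)
      = lsub (lmul N T (lmul N B (calF N \<alpha>))) (lmul N (lmul N (calF N \<alpha>) B) T)"
proof
  let ?F = "calF N \<alpha>" and ?Fi = "calFinv N \<alpha>"
  define A where "A = lmul N ?Fi (grad N \<phi> (lmul N T ?Fi))"
  have A: "A \<in> ghat N"
    using \<phi> T by (simp add: A_def ad_inv_smooth_fn)
  then show "lscale (1/2) (Rop A) \<in> ghat N" by simp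
  show "lax_C1 N \<alpha> \<phi> T = lmul N ?F (lscale (1/2) (Rop A))"
    using A by (simp add: lax_C1_def A_def lmul_lscale_right)
  show "lax_C2 N \<alpha> \<phi> T = lmul N (lscale (1/2) (Rop A)) ?F"
    using A by (simp add: lax_C2_def A_def lmul_lscale_left grad_calFinv_swap[OF \<phi> T])
  have "ham_field N \<alpha> T (grad N (\<lambda>X. \<phi> (lmul N X ?Fi)) T) = lscale (1/2)
      (lsub (lmul N T (lmul N (Rop A) ?F)) (lmul N (lmul N ?F (Rop A)) T))"
    unfolding grad_comp_lmul_right[OF ad_inv_smooth_fn[OF \<phi>] ghat_calFinv T] A_def
    by (rule ham_field_commuting[OF ad_inv_calF_commute[OF \<phi> T]])
  then show "ham_field N \<alpha> T (grad N (\<lambda>X. \<phi> (lmul N X ?Fi)) T)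
      = lsub (lmul N T (lmul N (lscale (1/2) (Rop A)) ?F))
          (lmul N (lmul N ?F (lscale (1/2) (Rop A))) T)"
    using T A by (simp add: lmul_lscale_left lmul_lscale_right) (auto simp: fun_eq_iff algebra_simps)
qed

lemma psi_flow_eq_ham_field:
  assumes \<phi>: "ad_inv N \<phi>" and T: "T \<in> ghat N"
  shows "psi_flow N \<alpha> \<phi> T = ham_field N \<alpha> T (grad N (\<lambda>X. \<phi> (lmul N X (calFinv N \<alpha>))) T)"
proof -
  obtain B where B: "B \<in> ghat N"
    and "lax_C1 N \<alpha> \<phi> T = lmul N (calF N \<alpha>) B" and "lax_C2 N \<alpha> \<phi> T = lmul N B (calF N \<alpha>)"
    and "ham_field N \<alpha> T (grad N (\<lambda>X. \<phi> (lmul N X (calFinv N \<alpha>))) T)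
      = lsub (lmul N T (lmul N B (calF N \<alpha>))) (lmul N (lmul N (calF N \<alpha>) B) T)"
    using lax_factorization[OF \<phi> T] by blast
  with T show ?thesis by (simp add: psi_flow_def lmul_assoc)
qed

lemma psi_ham_vf:
  assumes \<phi>: "ad_inv N \<phi>" and T: "T \<in> ghat N"
  shows "ham_vf N \<alpha> (\<lambda>X. \<phi> (lmul N X (calFinv N \<alpha>))) T (psi_flow N \<alpha> \<phi> T)"
  unfolding psi_flow_eq_ham_field[OF \<phi> T]
  by (rule ham_vf_ham_field[OF smooth_fn_comp_lmul_right[OF ad_inv_smooth_fn[OF \<phi>] ghat_calFinv] T])

lemma psi_flow_in_Tdir:
  assumes \<phi>: "ad_inv N \<phi>" and T: "T \<in> Tset N m"
  shows "psi_flow N \<alpha> \<phi> T \<in> Tdir N m"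
proof -
  have "T \<in> ghat N" using T by simp
  moreover have "smooth_fn N (\<lambda>X. \<phi> (lmul N X (calFinv N \<alpha>)))"
    using \<phi> by (simp add: ad_inv_smooth_fn smooth_fn_comp_lmul_right)
  ultimately show ?thesis
    using T by (simp add: psi_flow_eq_ham_field[OF \<phi>] ham_field_in_Tdir)
qed

lemma psi_lax_equations:
  assumes \<phi>: "ad_inv N \<phi>" and T: "T \<in> ghat N"
  shows "lscale c (lmul N (psi_flow N \<alpha> \<phi> T) (calFinv N \<alpha>))
      = lsub (lmul N (ladd (lid N) (lscale c (lmul N T (calFinv N \<alpha>)))) (lax_C1 N \<alpha> \<phi> T))
          (lmul N (lax_C1 N \<alpha> \<phi> T) (ladd (lid N) (lscale c (lmul N T (calFinv N \<alpha>)))))"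
    and "lscale c (lmul N (calFinv N \<alpha>) (psi_flow N \<alpha> \<phi> T))
      = lsub (lmul N (ladd (lid N) (lscale c (lmul N (calFinv N \<alpha>) T))) (lax_C2 N \<alpha> \<phi> T))
          (lmul N (lax_C2 N \<alpha> \<phi> T) (ladd (lid N) (lscale c (lmul N (calFinv N \<alpha>) T))))"
proof -
  obtain B where B: "B \<in> ghat N"
    and C1: "lax_C1 N \<alpha> \<phi> T = lmul N (calF N \<alpha>) B" and C2: "lax_C2 N \<alpha> \<phi> T = lmul N B (calF N \<alpha>)"
    using lax_factorization[OF \<phi> T] by blast
  have "lmul N (calF N \<alpha>) B \<in> ghat N" "lmul N B (calF N \<alpha>) \<in> ghat N"
    "lmul N T (calFinv N \<alpha>) \<in> ghat N" "lmul N (calFinv N \<alpha>) T \<in> ghat N"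
    using T B by simp_all
  then show "lscale c (lmul N (psi_flow N \<alpha> \<phi> T) (calFinv N \<alpha>))
      = lsub (lmul N (ladd (lid N) (lscale c (lmul N T (calFinv N \<alpha>)))) (lax_C1 N \<alpha> \<phi> T))
          (lmul N (lax_C1 N \<alpha> \<phi> T) (ladd (lid N) (lscale c (lmul N T (calFinv N \<alpha>)))))"
    and "lscale c (lmul N (calFinv N \<alpha>) (psi_flow N \<alpha> \<phi> T))
      = lsub (lmul N (ladd (lid N) (lscale c (lmul N (calFinv N \<alpha>) T))) (lax_C2 N \<alpha> \<phi> T))
          (lmul N (lax_C2 N \<alpha> \<phi> T) (ladd (lid N) (lscale c (lmul N (calFinv N \<alpha>) T))))"
    unfolding psi_flow_def C1 C2 calFinv_commutator[OF T B]
    by (simp_all add: lid_shift_commutator)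
qed

lemma psi_involution:
  assumes \<phi>1: "ad_inv N \<phi>1" and \<phi>2: "ad_inv N \<phi>2" and T: "T \<in> ghat N"
  shows "PB1 N \<alpha> (\<lambda>X. \<phi>1 (lmul N X (calFinv N \<alpha>))) (\<lambda>X. \<phi>2 (lmul N X (calFinv N \<alpha>))) T = 0"
proof -
  let ?F = "calF N \<alpha>" and ?Fi = "calFinv N \<alpha>"
  let ?\<psi>1 = "\<lambda>X. \<phi>1 (lmul N X ?Fi)" and ?\<psi>2 = "\<lambda>X. \<phi>2 (lmul N X ?Fi)"
  obtain B1 where B1: "B1 \<in> ghat N"
    and ham: "ham_field N \<alpha> T (grad N ?\<psi>1 T)
      = lsub (lmul N T (lmul N B1 ?F)) (lmul N (lmul N ?F B1) T)"
    using lax_factorization[OF \<phi>1 T] by blast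
  define G2 where "G2 = lmul N ?Fi (grad N \<phi>2 (lmul N T ?Fi))"
  have G2: "G2 \<in> ghat N" and grad2: "grad N ?\<psi>2 T = G2"
    using \<phi>2 T by (simp_all add: G2_def ad_inv_smooth_fn grad_comp_lmul_right)
  have sm: "smooth_fn N ?\<psi>1" "smooth_fn N ?\<psi>2"
    using \<phi>1 \<phi>2 by (simp_all add: smooth_fn_comp_lmul_right ad_inv_smooth_fn)
  have "PB1 N \<alpha> ?\<psi>1 ?\<psi>2 T = pair N (grad N ?\<psi>2 T) (ham_field N \<alpha> T (grad N ?\<psi>1 T))"
    using ham_vf_ham_field[OF sm(1) T] sm(2) unfolding ham_vf_def by blast
  also have "\<dots> = pair N G2 (lmul N T (lmul N B1 ?F)) - pair N G2 (lmul N (lmul N ?F B1) T)"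
    unfolding grad2 ham using T B1 G2 by (simp add: pair_lsub_right)
  also have "pair N G2 (lmul N T (lmul N B1 ?F)) = pair N G2 (lmul N (lmul N ?F B1) T)"
    using T B1 G2 ad_inv_calF_commute[OF \<phi>2 T, where \<alpha> = \<alpha>, folded G2_def]
    by (intro pair_commuting_sandwich) auto
  finally show ?thesis by simp
qed

theorem mainTheorem6:
  fixes N m :: nat and \<alpha> :: real
  assumes "N \<ge> 2" and "m \<ge> 1"
  shows
   \<comment> \<open>(a)\<close>
   "poisson_submanifold N \<alpha> (Tset N m) (Tdir N m)
   \<comment> \<open>(b)\<close>
    \<and> (\<forall>\<phi>. ad_inv N \<phi> \<longrightarrow>
        (let F = calF N \<alpha>; Fi = calFinv N \<alpha>; \<psi> = (\<lambda>T. \<phi> (lmul N T Fi));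
             C1 = (\<lambda>T. lscale (1/2) (lmul N F (Rop (lmul N Fi (grad N \<phi> (lmul N T Fi))))));
             C2 = (\<lambda>T. lscale (1/2) (lmul N (Rop (lmul N (grad N \<phi> (lmul N Fi T)) Fi)) F));
             V = (\<lambda>T. lsub (lmul N T (C2 T)) (lmul N (C1 T) T));
             T1 = (\<lambda>T. ladd (lid N) (lscale (complex_of_real \<alpha>) (lmul N T Fi)));
             T2 = (\<lambda>T. ladd (lid N) (lscale (complex_of_real \<alpha>) (lmul N Fi T)))
         in (\<forall>T\<in>ghat N. \<phi> (lmul N T Fi) = \<phi> (lmul N Fi T))
          \<and> smooth_fn N \<psi>
          \<and> (\<forall>T\<in>ghat N. ham_vf N \<alpha> \<psi> T (V T))
          \<and> (\<forall>T\<in>Tset N m. V T \<in> Tdir N m)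
          \<and> (\<forall>T\<in>ghat N.
               lscale (complex_of_real \<alpha>) (lmul N (V T) Fi)
                 = lsub (lmul N (T1 T) (C1 T)) (lmul N (C1 T) (T1 T))
             \<and> lscale (complex_of_real \<alpha>) (lmul N Fi (V T))
                 = lsub (lmul N (T2 T) (C2 T)) (lmul N (C2 T) (T2 T)))))
   \<comment> \<open>(c)\<close>
    \<and> (\<forall>\<phi>1 \<phi>2. ad_inv N \<phi>1 \<and> ad_inv N \<phi>2 \<longrightarrow>
        (\<forall>T\<in>ghat N. PB1 N \<alpha> (\<lambda>X. \<phi>1 (lmul N X (calFinv N \<alpha>)))
                              (\<lambda>X. \<phi>2 (lmul N X (calFinv N \<alpha>))) T = 0))"
proof (unfold Let_def lax_C1_def[symmetric] lax_C2_def[symmetric] psi_flow_def[symmetric],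
    intro conjI allI impI ballI)
qed (auto intro: Tset_poisson_submanifold ad_inv_calFinv_swap
    smooth_fn_comp_lmul_right[OF ad_inv_smooth_fn ghat_calFinv]
    psi_ham_vf psi_flow_in_Tdir psi_lax_equations psi_involution)

end
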